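(* Fix $n\ge1$, positive integers $M_{1,n},M_{2,n}$, random vectors $(\mathbf{X}_1,\mathbf{X}_2)$ in $\mathbb{R}^n\times\mathbb{R}^n$ with joint distribution $P_{\mathbf{X}_1,\mathbf{X}_2}$ such that $\|\mathbf{X}_1\|_2^2\le nS_1$ and $\|\mathbf{X}_2\|_2^2\le nS_2$ almost surely, a conditional density $Q_{\mathbf{Y}|\mathbf{X}_2}$ and a density $Q_{\mathbf{Y}}$ on $\mathbb{R}^n$, and $\gamma>0$. Then there exists an $(n,M_{1,n},M_{2,n},S_1,S_2,\varepsilon_n)$-code with $$\varepsilon_n\le\Pr(\mathcal{F}_n\cup\mathcal{G}_n)+\Lambda_1e^{-n\gamma}+\Lambda_{12}e^{-n\gamma},$$ where $\Lambda_1:=\sup_{\mathbf{x}_2,\mathbf{y}}\frac{(P_{\mathbf{X}_1|\mathbf{X}_2}W^n)(\mathbf{y}|\mathbf{x}_2)}{Q_{\mathbf{Y}|\mathbf{X}_2}(\mathbf{y}|\mathbf{x}_2)}$, $\Lambda_{12}:=\sup_{\mathbf{y}}\frac{(P_{\mathbf{X}_1,\mathbf{X}_2}W^n)(\mathbf{y})}{Q_{\mathbf{Y}}(\mathbf{y})}$ (Radon–Nikodym derivatives), and, with $\mathbf{Y}|\{\mathbf{X}_1=\mathbf{x}_1,\mathbf{X}_2=\mathbf{x}_2\}\sim W^n(\cdot|\mathbf{x}_1,\mathbf{x}_2)$, $\mathcal{F}_n:=\{\frac1n\log\frac{W^n(\mathbf{Y}|\mathbf{X}_1,\mathbf{X}_2)}{Q_{\mathbf{Y}|\mathbf{X}_2}(\mathbf{Y}|\mathbf{X}_2)}\le\frac1n\log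 M_{1,n}+\gamma\}$, $\mathcal{G}_n:=\{\frac1n\log\frac{W^n(\mathbf{Y}|\mathbf{X}_1,\mathbf{X}_2)}{Q_{\mathbf{Y}}(\mathbf{Y})}\le\frac1n\log(M_{1,n}M_{2,n})+\gamma\}$.
   Context: Logarithms natural. Channel $W(y|x_1,x_2)=\frac{1}{\sqrt{2\pi}}\exp(-\frac12(y-x_1-x_2)^2)$, $W^n$ its memoryless $n$-fold extension. $(P_{\mathbf{X}_1|\mathbf{X}_2}W^n)(\mathbf{y}|\mathbf{x}_2):=\int P_{\mathbf{X}_1|\mathbf{X}_2}(d\mathbf{x}_1|\mathbf{x}_2)W^n(\mathbf{y}|\mathbf{x}_1,\mathbf{x}_2)$ and $(P_{\mathbf{X}_1,\mathbf{X}_2}W^n)(\mathbf{y}):=\int W^n(\mathbf{y}|\mathbf{x}_1,\mathbf{x}_2)P_{\mathbf{X}_1,\mathbf{X}_2}(d\mathbf{x}_1,d\mathbf{x}_2)$ are the induced output densities. An $(n,M_{1,n},M_{2,n},S_1,S_2,\varepsilon_n)$-code: encoders $f_{1,n}:[M_{1,n}]\times[M_{2,n}]\to\mathbb{R}^n$, $f_{2,n}:[M_{2,n}]\to\mathbb{R}^n$, decoder $\varphi_n:\mathbb{R}^n\to[M_{1,n}]\times[M_{2,n}]$, with $\|f_{1,n}(m_1,m_2)\|_2^2\le nS_1$, $\|f_{2,n}(m_2)\|_2^2\le nS_2$ and average error probability (uniform independent messages) at most $\varepsilon_n$. *)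

theory Defs
  imports "HOL-Probability.Probability"
begin

text \<open>Vectors in R^n are modelled as real^'n with n = CARD('n).\<close>

definition W :: "real \<Rightarrow> real \<Rightarrow> real \<Rightarrow> real" where
  "W y x1 x2 = (1 / sqrt (2 * pi)) * exp (- ((y - x1 - x2)\<^sup>2) / 2)"

definition Wn :: "real^'n \<Rightarrow> real^'n \<Rightarrow> real^'n \<Rightarrow> real" where
  "Wn y x1 x2 = (\<Prod>i\<in>UNIV. W (y $ i) (x1 $ i) (x2 $ i))"

definition chan :: "real^'n \<Rightarrow> real^'n \<Rightarrow> (real^'n) measure" where
  "chan x1 x2 = density lborel (\<lambda>y. ennreal (Wn y x1 x2))"

text \<open>An (n, M1, M2, S1, S2, eps)-code with n = CARD('n); messages are {..<M}.\<close>
definition is_code ::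
  "nat \<Rightarrow> nat \<Rightarrow> real \<Rightarrow> real \<Rightarrow> real \<Rightarrow>
   (nat \<Rightarrow> nat \<Rightarrow> real^'n) \<Rightarrow> (nat \<Rightarrow> real^'n) \<Rightarrow> (real^'n \<Rightarrow> nat \<times> nat) \<Rightarrow> bool" where
  "is_code M1 M2 S1 S2 eps f1 f2 dec \<longleftrightarrow>
     (\<forall>m1<M1. \<forall>m2<M2. (norm (f1 m1 m2))\<^sup>2 \<le> real CARD('n) * S1) \<and>
     (\<forall>m2<M2. (norm (f2 m2))\<^sup>2 \<le> real CARD('n) * S2) \<and>
     (\<forall>y. dec y \<in> {..<M1} \<times> {..<M2}) \<and>
     dec \<in> measurable borel (count_space UNIV) \<and>
     (1 / (real M1 * real M2)) *
       (\<Sum>m1<M1. \<Sum>m2<M2. measure (chan (f1 m1 m2) (f2 m2)) {y. dec y \<noteq> (m1, m2)}) \<le> eps"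

definition joint_XY :: "((real^'n) \<times> (real^'n)) measure \<Rightarrow> (((real^'n) \<times> (real^'n)) \<times> (real^'n)) measure" where
  "joint_XY P = P \<bind> (\<lambda>x. distr (chan (fst x) (snd x)) borel (\<lambda>y. (x, y)))"

end

theory Submission
  imports Defs
begin

text \<open>Random coding with threshold decoding, derandomised. The codewords \<open>x2(m2)\<close> are drawn
  independently from the law of \<open>X2\<close> and \<open>x1(m1, m2)\<close> from the conditional law of \<open>X1\<close> given
  \<open>x2(m2)\<close>; the decoder returns the unique message pair whose codewords pass both
  information-density tests. A message is decoded wrongly only if its own codewords fail a test
  or the codewords of another message pass. Averaged over the codebook, the first event has
  probability \<open>Pr(F \<union> G)\<close>; for the second, a change of measure from \<open>W\<^sup>n\<close> to \<open>Q\<close> bounds each of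
  the at most \<open>M1\<close> (same \<open>x2\<close>) resp. \<open>M1 M2\<close> (different \<open>x2\<close>) competing messages by
  \<open>\<Lambda>1 exp (-n\<gamma>) / M1\<close> resp. \<open>\<Lambda>12 exp (-n\<gamma>) / (M1 M2)\<close>. The average is turned into a
  deterministic codebook by fixing codewords one at a time at points where the conditional
  average is not exceeded and the power constraints hold, which is possible since they hold
  almost surely. If a \<open>Q\<close> density vanishes somewhere, a \<open>\<Lambda>\<close> is infinite and any code
  meeting the power constraints will do.\<close>

lemma measurable_fst_borel[measurable]:
  "fst \<in> borel_measurable (borel :: ('a::second_countable_topology \<times> 'b::second_countable_topology) measure)"
  by (subst borel_prod[symmetric]) simp

lemma measurable_snd_borel[measurable]:
  "snd \<in> borel_measurable (borel :: ('a::second_countable_topology \<times> 'b::second_countable_topology) measure)"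
  by (subst borel_prod[symmetric]) simp

lemma measurable_Pair_borel[measurable (raw)]:
  fixes f :: "'c \<Rightarrow> 'a::second_countable_topology" and g :: "'c \<Rightarrow> 'b::second_countable_topology"
  assumes "f \<in> borel_measurable M" "g \<in> borel_measurable M"
  shows "(\<lambda>x. (f x, g x)) \<in> borel_measurable M"
  using assms by (subst borel_prod[symmetric]) measurable

lemma measurable_curried_borel:
  fixes h :: "'a::second_countable_topology \<Rightarrow> 'b::second_countable_topology \<Rightarrow> 'c"
  assumes "(\<lambda>p. h (fst p) (snd p)) \<in> measurable borel N"
    and "a \<in> borel_measurable M" "b \<in> borel_measurable M"
  shows "(\<lambda>z. h (a z) (b z)) \<in> measurable M N"
  using measurable_compose[OF measurable_Pair_borel[OF assms(2,3)] assms(1)] by simp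

lemma measurable_vec_nth[measurable (raw)]:
  fixes f :: "'a \<Rightarrow> real^'n"
  shows "f \<in> borel_measurable M \<Longrightarrow> (\<lambda>x. f x $ i) \<in> borel_measurable M"
  by (erule measurable_compose, intro borel_measurable_continuous_onI continuous_intros)

lemma nn_integral_pos_ne_zero:
  assumes "prob_space M" "f \<in> borel_measurable M" "\<And>x. f x > 0"
  shows "(\<integral>\<^sup>+ x. ennreal (f x) \<partial>M) \<noteq> 0"
proof
  interpret prob_space M by fact
  assume "(\<integral>\<^sup>+ x. ennreal (f x) \<partial>M) = 0"
  moreover have "(\<lambda>x. ennreal (f x)) \<in> borel_measurable M"
    using assms(2) by measurable
  ultimately have "AE x in M. ennreal (f x) = 0"
    by (simp add: nn_integral_0_iff_AE)
  then have "AE x in M. False"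
    by (rule eventually_mono) (use assms(3) in \<open>simp add: less_le\<close>)
  then show False by simp
qed

lemma SUP_divide_ennreal_eq_top:
  fixes a :: "'i \<Rightarrow> ennreal" and q :: "'i \<Rightarrow> real"
  assumes "a i \<noteq> 0" "q i \<le> 0"
  shows "(SUP i. a i / ennreal (q i)) = \<top>"
proof -
  have "a i / ennreal (q i) = \<top>"
    using assms by (simp add: ennreal_eq_0_iff ennreal_divide_eq_top_iff)
  then show ?thesis
    using SUP_upper[of i UNIV "\<lambda>i. a i / ennreal (q i)"] by (simp add: top_unique)
qed

lemma AE_exists_le_nn_integral:
  assumes "prob_space M" "AE x in M. P x" "\<phi> \<in> borel_measurable M"
  shows "\<exists>x\<in>space M. P x \<and> \<phi> x \<le> (\<integral>\<^sup>+ x. \<phi> x \<partial>M)"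
proof (rule ccontr)
  interpret prob_space M by fact
  define I where "I = (\<integral>\<^sup>+ x. \<phi> x \<partial>M)"
  assume contra: "\<not> ?thesis"
  have above: "AE x in M. I < \<phi> x"
    using assms(2) AE_space by eventually_elim (use contra in \<open>auto simp: I_def not_le\<close>)
  show False
  proof (cases "I = \<infinity>")
    case True
    with above show False by simp
  next
    case False
    have "(\<integral>\<^sup>+x. I \<partial>M) < (\<integral>\<^sup>+x. \<phi> x \<partial>M)"
    proof (rule nn_integral_less)
      show "integral\<^sup>N M (\<lambda>x. I) \<noteq> \<infinity>"
        using False by (simp add: emeasure_space_1)
      show "AE x in M. I \<le> \<phi> x"
        using above by eventually_elim simp
      show "\<not> (AE x in M. \<phi> x \<le> I)"
      proof
        assume "AE x in M. \<phi> x \<le> I"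
        with above have "AE x in M. False" by eventually_elim simp
        then show False by simp
      qed
    qed (use assms(3) in auto)
    then show False by (simp add: emeasure_space_1 I_def)
  qed
qed

section \<open>Fixing independent coordinates below their mean\<close>

lemma sum_offdiag_insert:
  fixes h :: "'i \<Rightarrow> 'i \<Rightarrow> 'a::comm_monoid_add"
  assumes "finite I" "a \<notin> I"
  shows "(\<Sum>i\<in>insert a I. \<Sum>j\<in>insert a I - {i}. h i j)
    = (\<Sum>j\<in>I. h a j + h j a) + (\<Sum>i\<in>I. \<Sum>j\<in>I - {i}. h i j)"
proof -
  have "(\<Sum>i\<in>I. \<Sum>j\<in>insert a I - {i}. h i j) = (\<Sum>i\<in>I. h i a + (\<Sum>j\<in>I - {i}. h i j))"
  proof (rule sum.cong)
    fix i assume "i \<in> I"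
    then have "insert a I - {i} = insert a (I - {i})" using assms(2) by auto
    then show "(\<Sum>j\<in>insert a I - {i}. h i j) = h i a + (\<Sum>j\<in>I - {i}. h i j)"
      using assms by simp
  qed simp
  then show ?thesis
    using assms by (simp add: sum.distrib ac_simps)
qed

lemma sum_offdiag_const:
  fixes c :: "'a::semiring_1"
  assumes "finite I"
  shows "(\<Sum>i\<in>I. \<Sum>j\<in>I - {i}. c) = of_nat (card I) * (of_nat (card I - 1) * c)"
proof -
  have "(\<Sum>i\<in>I. \<Sum>j\<in>I - {i}. c) = (\<Sum>i\<in>I. of_nat (card I - 1) * c)"
    using assms by (intro sum.cong) simp_all
  then show ?thesis
    by simp
qed

lemma exists_point_le_interaction_mean:
  fixes \<nu> :: "'a measure" and \<mu> :: "'i \<Rightarrow> 'a measure" and f :: "'a \<Rightarrow> ennreal"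
    and g h :: "'i \<Rightarrow> 'a \<Rightarrow> 'a \<Rightarrow> ennreal"
  assumes "finite I" "prob_space \<nu>" "AE x in \<nu>. G x" "f \<in> borel_measurable \<nu>"
    and prob: "\<And>j. j \<in> I \<Longrightarrow> prob_space (\<mu> j)"
    and g_meas: "\<And>j. j \<in> I \<Longrightarrow> (\<lambda>(x, y). g j x y) \<in> borel_measurable (\<nu> \<Otimes>\<^sub>M \<mu> j)"
    and h_meas: "\<And>j. j \<in> I \<Longrightarrow> (\<lambda>(y, x). h j y x) \<in> borel_measurable (\<mu> j \<Otimes>\<^sub>M \<nu>)"
  shows "\<exists>x\<in>space \<nu>. G x \<and> f x + (\<Sum>j\<in>I. (\<integral>\<^sup>+ y. g j x y \<partial>\<mu> j) + (\<integral>\<^sup>+ y. h j y x \<partial>\<mu> j))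
    \<le> (\<integral>\<^sup>+ x. f x \<partial>\<nu>) + (\<Sum>j\<in>I. (\<integral>\<^sup>+ x. \<integral>\<^sup>+ y. g j x y \<partial>\<mu> j \<partial>\<nu>) + (\<integral>\<^sup>+ y. \<integral>\<^sup>+ x. h j y x \<partial>\<nu> \<partial>\<mu> j))"
proof -
  have inner_meas: "(\<lambda>x. \<integral>\<^sup>+ y. g j x y \<partial>\<mu> j) \<in> borel_measurable \<nu>"
      "(\<lambda>x. \<integral>\<^sup>+ y. h j y x \<partial>\<mu> j) \<in> borel_measurable \<nu>" if "j \<in> I" for j
  proof -
    interpret sigma_finite_measure "\<mu> j"
      using prob that by (simp add: prob_space_imp_sigma_finite)
    show "(\<lambda>x. \<integral>\<^sup>+ y. g j x y \<partial>\<mu> j) \<in> borel_measurable \<nu>"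
      using g_meas[OF that] by (rule borel_measurable_nn_integral)
    have "(\<lambda>(x, y). h j y x) \<in> borel_measurable (\<nu> \<Otimes>\<^sub>M \<mu> j)"
      using measurable_pair_swap[OF h_meas[OF that]] by (simp add: case_prod_beta)
    then show "(\<lambda>x. \<integral>\<^sup>+ y. h j y x \<partial>\<mu> j) \<in> borel_measurable \<nu>"
      by (rule borel_measurable_nn_integral)
  qed
  define \<phi> where "\<phi> x = f x + (\<Sum>j\<in>I. (\<integral>\<^sup>+ y. g j x y \<partial>\<mu> j) + (\<integral>\<^sup>+ y. h j y x \<partial>\<mu> j))" for x
  have \<phi>_meas: "\<phi> \<in> borel_measurable \<nu>"
    unfolding \<phi>_def using assms(4) inner_meas by (intro borel_measurable_add borel_measurable_sum) auto
  have "(\<integral>\<^sup>+ x. \<integral>\<^sup>+ y. h j y x \<partial>\<mu> j \<partial>\<nu>) = (\<integral>\<^sup>+ y. \<integral>\<^sup>+ x. h j y x \<partial>\<nu> \<partial>\<mu> j)" if "j \<in> I" for j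
  proof -
    interpret pair_sigma_finite "\<mu> j" \<nu>
      using prob that assms(2) by (simp add: pair_sigma_finite_def prob_space_imp_sigma_finite)
    show ?thesis
      using Fubini'[OF h_meas[OF that]] by simp
  qed
  then have "(\<integral>\<^sup>+ x. \<phi> x \<partial>\<nu>) = (\<integral>\<^sup>+ x. f x \<partial>\<nu>)
      + (\<Sum>j\<in>I. (\<integral>\<^sup>+ x. \<integral>\<^sup>+ y. g j x y \<partial>\<mu> j \<partial>\<nu>) + (\<integral>\<^sup>+ y. \<integral>\<^sup>+ x. h j y x \<partial>\<nu> \<partial>\<mu> j))"
    unfolding \<phi>_def using assms(4) inner_meas
    by (simp add: nn_integral_add nn_integral_sum borel_measurable_sum)
  then show ?thesis
    using AE_exists_le_nn_integral[OF assms(2,3) \<phi>_meas] unfolding \<phi>_def by simp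
qed

text \<open>The right-hand side is the expectation for independent coordinates \<open>x i \<sim> \<mu> i\<close>.
  Coordinates are fixed one at a time; the pair terms involving a fixed coordinate become
  one-coordinate terms of the remaining ones.\<close>

lemma exists_pairwise_sum_le_expectation:
  fixes \<mu> :: "'i \<Rightarrow> 'a measure" and f :: "'i \<Rightarrow> 'a \<Rightarrow> ennreal"
    and g :: "'i \<Rightarrow> 'i \<Rightarrow> 'a \<Rightarrow> 'a \<Rightarrow> ennreal"
  assumes "finite I"
    and "\<And>i. i \<in> I \<Longrightarrow> prob_space (\<mu> i)"
    and "\<And>i. i \<in> I \<Longrightarrow> AE x in \<mu> i. G i x"
    and "\<And>i. i \<in> I \<Longrightarrow> f i \<in> borel_measurable (\<mu> i)"
    and "\<And>i j. i \<in> I \<Longrightarrow> j \<in> I \<Longrightarrow> i \<noteq> j \<Longrightarrow>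
      (\<lambda>(x, y). g i j x y) \<in> borel_measurable (\<mu> i \<Otimes>\<^sub>M \<mu> j)"
  shows "\<exists>x. (\<forall>i\<in>I. x i \<in> space (\<mu> i) \<and> G i (x i)) \<and>
    (\<Sum>i\<in>I. f i (x i)) + (\<Sum>i\<in>I. \<Sum>j\<in>I - {i}. g i j (x i) (x j))
      \<le> (\<Sum>i\<in>I. \<integral>\<^sup>+ x. f i x \<partial>\<mu> i)
        + (\<Sum>i\<in>I. \<Sum>j\<in>I - {i}. \<integral>\<^sup>+ x. \<integral>\<^sup>+ y. g i j x y \<partial>\<mu> j \<partial>\<mu> i)"
  using assms
proof (induction I arbitrary: f rule: finite_induct)
  case empty
  then show ?case by simp
next
  case (insert a I)
  note prob = insert.prems(1) and f_meas = insert.prems(3)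
  have g_meas: "(\<lambda>(x, y). g a j x y) \<in> borel_measurable (\<mu> a \<Otimes>\<^sub>M \<mu> j)"
    "(\<lambda>(x, y). g j a x y) \<in> borel_measurable (\<mu> j \<Otimes>\<^sub>M \<mu> a)" if "j \<in> I" for j
    using insert.prems(4) that insert.hyps by auto
  obtain xa where xa: "xa \<in> space (\<mu> a)" "G a xa"
    and xa_le: "f a xa + (\<Sum>j\<in>I. (\<integral>\<^sup>+ y. g a j xa y \<partial>\<mu> j) + (\<integral>\<^sup>+ y. g j a y xa \<partial>\<mu> j))
      \<le> (\<integral>\<^sup>+ x. f a x \<partial>\<mu> a)
        + (\<Sum>j\<in>I. (\<integral>\<^sup>+ x. \<integral>\<^sup>+ y. g a j x y \<partial>\<mu> j \<partial>\<mu> a) + (\<integral>\<^sup>+ y. \<integral>\<^sup>+ x. g j a y x \<partial>\<mu> a \<partial>\<mu> j))"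
    using exists_point_le_interaction_mean[OF insert.hyps(1) prob[of a] insert.prems(2)[of a] f_meas[of a],
        of \<mu> "g a" "\<lambda>j. g j a"] prob g_meas by auto
  have g_meas_xa: "g a j xa \<in> borel_measurable (\<mu> j)" "(\<lambda>y. g j a y xa) \<in> borel_measurable (\<mu> j)"
    if "j \<in> I" for j
    using measurable_Pair2[OF g_meas(1)[OF that] xa(1)] measurable_Pair1[OF g_meas(2)[OF that] xa(1)] by auto
  define f' where "f' j y = f j y + g a j xa y + g j a y xa" for j y
  obtain x where x: "\<forall>i\<in>I. x i \<in> space (\<mu> i) \<and> G i (x i)"
    and x_le: "(\<Sum>i\<in>I. f' i (x i)) + (\<Sum>i\<in>I. \<Sum>j\<in>I - {i}. g i j (x i) (x j))
      \<le> (\<Sum>i\<in>I. \<integral>\<^sup>+ x. f' i x \<partial>\<mu> i) + (\<Sum>i\<in>I. \<Sum>j\<in>I - {i}. \<integral>\<^sup>+ x. \<integral>\<^sup>+ y. g i j x y \<partial>\<mu> j \<partial>\<mu> i)"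
    using insert.IH[of f'] insert.prems g_meas_xa unfolding f'_def by force
  have integral_f': "(\<Sum>i\<in>I. \<integral>\<^sup>+ x. f' i x \<partial>\<mu> i) = (\<Sum>i\<in>I. \<integral>\<^sup>+ x. f i x \<partial>\<mu> i) +
      (\<Sum>j\<in>I. (\<integral>\<^sup>+ y. g a j xa y \<partial>\<mu> j) + (\<integral>\<^sup>+ y. g j a y xa \<partial>\<mu> j))"
    unfolding f'_def using f_meas g_meas_xa
    by (simp add: nn_integral_add sum.distrib add.assoc)
  define x' where "x' = x(a := xa)"
  have x'_I: "x' i = x i" if "i \<in> I" for i
    using that insert.hyps by (auto simp: x'_def)
  have x'_a: "x' a = xa"
    by (simp add: x'_def)
  have "(\<Sum>i\<in>insert a I. \<Sum>j\<in>insert a I - {i}. g i j (x' i) (x' j))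
      = (\<Sum>j\<in>I. g a j xa (x j) + g j a (x j) xa) + (\<Sum>i\<in>I. \<Sum>j\<in>I - {i}. g i j (x i) (x j))"
  proof -
    have "(\<Sum>i\<in>I. \<Sum>j\<in>I - {i}. g i j (x' i) (x' j)) = (\<Sum>i\<in>I. \<Sum>j\<in>I - {i}. g i j (x i) (x j))"
      by (intro sum.cong refl) (auto simp: x'_I)
    then show ?thesis
      unfolding sum_offdiag_insert[OF insert.hyps] by (simp add: x'_I x'_a)
  qed
  moreover have "(\<Sum>i\<in>insert a I. f i (x' i)) = f a xa + (\<Sum>i\<in>I. f i (x i))"
    using insert.hyps by (simp add: x'_I x'_a)
  ultimately have "(\<Sum>i\<in>insert a I. f i (x' i)) + (\<Sum>i\<in>insert a I. \<Sum>j\<in>insert a I - {i}. g i j (x' i) (x' j))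
      = f a xa + ((\<Sum>i\<in>I. f' i (x i)) + (\<Sum>i\<in>I. \<Sum>j\<in>I - {i}. g i j (x i) (x j)))"
    by (simp add: f'_def sum.distrib ac_simps)
  also have "\<dots> \<le> f a xa + (\<Sum>j\<in>I. (\<integral>\<^sup>+ y. g a j xa y \<partial>\<mu> j) + (\<integral>\<^sup>+ y. g j a y xa \<partial>\<mu> j))
      + ((\<Sum>i\<in>I. \<integral>\<^sup>+ x. f i x \<partial>\<mu> i) + (\<Sum>i\<in>I. \<Sum>j\<in>I - {i}. \<integral>\<^sup>+ x. \<integral>\<^sup>+ y. g i j x y \<partial>\<mu> j \<partial>\<mu> i))"
    using add_left_mono[OF x_le, of "f a xa"] by (simp add: integral_f' ac_simps)
  also have "\<dots> \<le> (\<Sum>i\<in>insert a I. \<integral>\<^sup>+ x. f i x \<partial>\<mu> i)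
      + (\<Sum>i\<in>insert a I. \<Sum>j\<in>insert a I - {i}. \<integral>\<^sup>+ x. \<integral>\<^sup>+ y. g i j x y \<partial>\<mu> j \<partial>\<mu> i)"
    using add_right_mono[OF xa_le]
    unfolding sum_offdiag_insert[OF insert.hyps] sum.insert[OF insert.hyps]
    by (simp add: sum.distrib ac_simps)
  finally show ?case
    using x xa by (intro exI[of _ x']) (auto simp: x'_I x'_def)
qed

lemma sum_offdiag_grid:
  fixes a d :: "nat \<Rightarrow> 'a::comm_semiring_1" and b :: "nat \<Rightarrow> nat \<Rightarrow> 'a"
  shows "(\<Sum>s\<in>{..<M1} \<times> {..<M2}. a (snd s)) +
      (\<Sum>s\<in>{..<M1} \<times> {..<M2}. \<Sum>t\<in>{..<M1} \<times> {..<M2} - {s}.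
         if snd s = snd t then d (snd s) else b (snd s) (snd t))
    = (\<Sum>m2<M2. of_nat M1 * (a m2 + of_nat (M1 - 1) * d m2))
      + (\<Sum>m2<M2. \<Sum>m2'\<in>{..<M2} - {m2}. of_nat M1 * of_nat M1 * b m2 m2')"
proof -
  have inner: "(\<Sum>t\<in>{..<M1} \<times> {..<M2} - {(m1, m2)}. if m2 = snd t then d m2 else b m2 (snd t))
      = of_nat (M1 - 1) * d m2 + of_nat M1 * (\<Sum>m2'\<in>{..<M2} - {m2}. b m2 m2')"
    if "m1 < M1" "m2 < M2" for m1 m2
  proof -
    have split: "{..<M1} \<times> {..<M2} - {(m1, m2)}
        = ({..<M1} - {m1}) \<times> ({..<M2} \<inter> {m2}) \<union> {..<M1} \<times> ({..<M2} - {m2})"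
      by auto
    have "(\<Sum>t\<in>{..<M1} \<times> {..<M2} - {(m1, m2)}. if m2 = snd t then d m2 else b m2 (snd t))
        = (\<Sum>t\<in>({..<M1} - {m1}) \<times> ({..<M2} \<inter> {m2}). if m2 = snd t then d m2 else b m2 (snd t))
          + (\<Sum>t\<in>{..<M1} \<times> ({..<M2} - {m2}). if m2 = snd t then d m2 else b m2 (snd t))"
      unfolding split by (rule sum.union_disjoint) auto
    also have "\<dots> = (\<Sum>t\<in>({..<M1} - {m1}) \<times> ({..<M2} \<inter> {m2}). d m2)
          + (\<Sum>t\<in>{..<M1} \<times> ({..<M2} - {m2}). b m2 (snd t))"
      by (intro arg_cong2[where f=plus] sum.cong) auto
    also have "\<dots> = of_nat (M1 - 1) * d m2 + of_nat M1 * (\<Sum>m2'\<in>{..<M2} - {m2}. b m2 m2')"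
      using that by (simp add: sum.cartesian_product' sum_distrib_left)
    finally show ?thesis .
  qed
  have "(\<Sum>s\<in>{..<M1} \<times> {..<M2}. \<Sum>t\<in>{..<M1} \<times> {..<M2} - {s}.
         if snd s = snd t then d (snd s) else b (snd s) (snd t))
    = (\<Sum>m1<M1. \<Sum>m2<M2. of_nat (M1 - 1) * d m2 + of_nat M1 * (\<Sum>m2'\<in>{..<M2} - {m2}. b m2 m2'))"
    unfolding sum.cartesian_product' by (intro sum.cong refl, simp only: snd_conv, rule inner) auto
  then show ?thesis
    by (simp add: sum.cartesian_product' sum.distrib sum_distrib_left algebra_simps)
qed

section \<open>The Gaussian channel\<close>

lemma W_pos: "W y a b > 0"
  by (simp add: W_def)

lemma nn_integral_W: "(\<integral>\<^sup>+ y. ennreal (W y a b) \<partial>lborel) = 1"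
proof -
  interpret prob_space "density lborel (normal_density (a + b) 1)"
    by (rule prob_space_normal_density) simp
  have "W y a b = normal_density (a + b) 1 y" for y
    by (simp add: W_def normal_density_def algebra_simps)
  then show ?thesis
    using emeasure_space_1 by (simp add: emeasure_density)
qed

lemma measurable_W[measurable (raw)]:
  assumes "f \<in> borel_measurable M" "g \<in> borel_measurable M" "h \<in> borel_measurable M"
  shows "(\<lambda>x. W (f x) (g x) (h x)) \<in> borel_measurable M"
  unfolding W_def using assms by measurable

lemma measurable_Wn[measurable (raw)]:
  fixes f g h :: "'a \<Rightarrow> real^'n"
  assumes "f \<in> borel_measurable M" "g \<in> borel_measurable M" "h \<in> borel_measurable M"
  shows "(\<lambda>x. Wn (f x) (g x) (h x)) \<in> borel_measurable M"
  unfolding Wn_def using assms by measurable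

lemma Wn_pos: "Wn y x1 x2 > 0"
  unfolding Wn_def by (intro prod_pos) (simp add: W_pos)

lemma nn_integral_Wn: "(\<integral>\<^sup>+ y. ennreal (Wn y x1 x2) \<partial>lborel) = 1"
proof -
  have inj: "inj (\<lambda>i. axis i (1::real) :: real^'n)"
    by (auto simp: inj_def axis_eq_axis)
  have Basis: "(Basis :: (real^'n) set) = range (\<lambda>i. axis i 1)"
    by (auto simp: Basis_vec_def)
  have "ennreal (Wn y x1 x2) = (\<Prod>b\<in>Basis. ennreal (W (y \<bullet> b) (x1 \<bullet> b) (x2 \<bullet> b)))" for y
    unfolding Wn_def Basis
    by (subst prod.reindex[OF inj]) (simp add: prod_ennreal W_pos less_imp_le cart_eq_inner_axis)
  then show ?thesis
    by (simp add: nn_integral_lborel_prod[where f="\<lambda>b t. W t (x1 \<bullet> b) (x2 \<bullet> b)"]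
        nn_integral_W W_pos less_imp_le)
qed

lemma sets_chan[simp, measurable_cong]: "sets (chan x1 x2) = sets borel"
  by (simp add: chan_def)

lemma space_chan[simp]: "space (chan x1 x2) = UNIV"
  by (simp add: chan_def)

lemma emeasure_chan:
  "S \<in> sets borel \<Longrightarrow> emeasure (chan x1 x2) S = (\<integral>\<^sup>+ y. ennreal (Wn y x1 x2) * indicator S y \<partial>lborel)"
  unfolding chan_def by (subst emeasure_density) auto

lemma prob_space_chan: "prob_space (chan x1 x2)"
  by (rule prob_spaceI) (simp add: emeasure_chan nn_integral_Wn)

lemma measurable_chan[measurable (raw)]:
  fixes f g :: "'a \<Rightarrow> real^'n"
  assumes [measurable]: "f \<in> borel_measurable M" "g \<in> borel_measurable M"
  shows "(\<lambda>x. chan (f x) (g x)) \<in> measurable M (subprob_algebra borel)"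
proof (rule measurable_subprob_algebra)
  fix A :: "(real^'n) set" assume [measurable]: "A \<in> sets borel"
  show "(\<lambda>x. emeasure (chan (f x) (g x)) A) \<in> borel_measurable M"
    by (simp add: emeasure_chan)
qed (auto intro: prob_space_imp_subprob_space prob_space_chan)

section \<open>Threshold tests and decoding\<close>

lemma nn_integral_acceptance_region_le:
  fixes m :: "'b::euclidean_space \<Rightarrow> ennreal" and w q :: "'b \<Rightarrow> real"
  assumes [measurable]: "m \<in> borel_measurable borel" "A \<in> sets borel" "w \<in> borel_measurable borel"
    and "\<And>y. m y \<le> \<Lambda> * ennreal (q y)"
    and "\<And>y. y \<in> A \<Longrightarrow> c * ennreal (q y) \<le> e * ennreal (w y)"
    and "(\<integral>\<^sup>+ y. ennreal (w y) \<partial>lborel) = 1"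
  shows "c * (\<integral>\<^sup>+ y. m y * indicator A y \<partial>lborel) \<le> \<Lambda> * e"
proof -
  have "c * (\<integral>\<^sup>+ y. m y * indicator A y \<partial>lborel) = (\<integral>\<^sup>+ y. c * (m y * indicator A y) \<partial>lborel)"
    by (rule nn_integral_cmult[symmetric]) measurable
  also have "\<dots> \<le> (\<integral>\<^sup>+ y. \<Lambda> * e * ennreal (w y) \<partial>lborel)"
  proof (intro nn_integral_mono)
    fix y
    show "c * (m y * indicator A y) \<le> \<Lambda> * e * ennreal (w y)"
    proof (cases "y \<in> A")
      case True
      have "c * m y \<le> \<Lambda> * (c * ennreal (q y))"
        using mult_left_mono[OF assms(4), of c] by (simp add: ac_simps)
      also have "\<dots> \<le> \<Lambda> * (e * ennreal (w y))"
        using assms(5)[OF True] by (rule mult_left_mono) simp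
      finally show ?thesis
        using True by (simp add: ac_simps)
    qed simp
  qed
  also have "\<dots> = \<Lambda> * e * (\<integral>\<^sup>+ y. ennreal (w y) \<partial>lborel)"
    by (rule nn_integral_cmult) measurable
  finally show ?thesis
    using assms(6) by simp
qed

text \<open>An input drawn from \<open>\<mu>\<close>, independently of \<open>x'\<close>, passes the test for \<open>x'\<close> with
  probability at most \<open>\<Lambda> e / c\<close>: on the acceptance region \<open>q\<close> dominates the output
  density \<open>w x'\<close> up to the factor \<open>e / c\<close>, and \<open>\<Lambda> q\<close> dominates the output density of \<open>\<mu>\<close>.\<close>

lemma threshold_test_change_of_measure:
  fixes \<mu> \<nu> :: "'a::second_countable_topology measure" and w :: "'a \<Rightarrow> 'b::euclidean_space \<Rightarrow> real"
    and pass :: "'a \<Rightarrow> 'b \<Rightarrow> bool" and q :: "'b \<Rightarrow> real"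
  assumes "prob_space \<mu>" "prob_space \<nu>"
    and [measurable_cong]: "sets \<mu> = sets borel" "sets \<nu> = sets borel"
    and w_meas: "(\<lambda>p. w (fst p) (snd p)) \<in> borel_measurable borel"
    and pass_meas: "Measurable.pred borel (\<lambda>p. pass (fst p) (snd p))"
    and mixture_le: "\<And>y. (\<integral>\<^sup>+ x. ennreal (w x y) \<partial>\<mu>) \<le> \<Lambda> * ennreal (q y)"
    and pass_le: "\<And>x' y. pass x' y \<Longrightarrow> c * ennreal (q y) \<le> e * ennreal (w x' y)"
    and w_density: "\<And>x'. (\<integral>\<^sup>+ y. ennreal (w x' y) \<partial>lborel) = 1"
  shows "c * (\<integral>\<^sup>+ x. \<integral>\<^sup>+ x'. \<integral>\<^sup>+ y. ennreal (w x y) * indicator {y. pass x' y} y \<partial>lborel \<partial>\<nu> \<partial>\<mu>)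
    \<le> \<Lambda> * e"
proof -
  interpret \<mu>: prob_space \<mu> by fact
  interpret \<nu>: prob_space \<nu> by fact
  interpret \<mu>\<nu>: pair_sigma_finite \<mu> \<nu>
    by (simp add: pair_sigma_finite_def \<mu>.sigma_finite_measure_axioms \<nu>.sigma_finite_measure_axioms)
  interpret \<mu>l: pair_sigma_finite \<mu> lborel
    by (simp add: pair_sigma_finite_def \<mu>.sigma_finite_measure_axioms lborel.sigma_finite_measure_axioms)
  note measurable_curried_borel[OF w_meas, measurable (raw)]
    measurable_curried_borel[OF pass_meas, measurable (raw)]
  define m where "m y = (\<integral>\<^sup>+ x. ennreal (w x y) \<partial>\<mu>)" for y
  have m_meas[measurable]: "m \<in> borel_measurable borel"
    unfolding m_def by (rule \<mu>.borel_measurable_nn_integral) measurable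
  have "(\<integral>\<^sup>+ x. \<integral>\<^sup>+ x'. \<integral>\<^sup>+ y. ennreal (w x y) * indicator {y. pass x' y} y \<partial>lborel \<partial>\<nu> \<partial>\<mu>)
      = (\<integral>\<^sup>+ x'. \<integral>\<^sup>+ x. \<integral>\<^sup>+ y. ennreal (w x y) * indicator {y. pass x' y} y \<partial>lborel \<partial>\<mu> \<partial>\<nu>)"
    by (rule \<mu>\<nu>.Fubini'[symmetric]) measurable
  also have "\<dots> = (\<integral>\<^sup>+ x'. \<integral>\<^sup>+ y. m y * indicator {y. pass x' y} y \<partial>lborel \<partial>\<nu>)"
  proof (intro nn_integral_cong)
    fix x'
    have "(\<integral>\<^sup>+ x. \<integral>\<^sup>+ y. ennreal (w x y) * indicator {y. pass x' y} y \<partial>lborel \<partial>\<mu>)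
        = (\<integral>\<^sup>+ y. \<integral>\<^sup>+ x. ennreal (w x y) * indicator {y. pass x' y} y \<partial>\<mu> \<partial>lborel)"
      by (rule \<mu>l.Fubini'[symmetric]) measurable
    also have "\<dots> = (\<integral>\<^sup>+ y. m y * indicator {y. pass x' y} y \<partial>lborel)"
      unfolding m_def by (intro nn_integral_cong nn_integral_multc) measurable
    finally show "(\<integral>\<^sup>+ x. \<integral>\<^sup>+ y. ennreal (w x y) * indicator {y. pass x' y} y \<partial>lborel \<partial>\<mu>)
        = (\<integral>\<^sup>+ y. m y * indicator {y. pass x' y} y \<partial>lborel)" .
  qed
  finally have "c * (\<integral>\<^sup>+ x. \<integral>\<^sup>+ x'. \<integral>\<^sup>+ y. ennreal (w x y) * indicator {y. pass x' y} y \<partial>lborel \<partial>\<nu> \<partial>\<mu>)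
      = c * (\<integral>\<^sup>+ x'. \<integral>\<^sup>+ y. m y * indicator {y. pass x' y} y \<partial>lborel \<partial>\<nu>)"
    by (rule arg_cong)
  also have "\<dots> = (\<integral>\<^sup>+ x'. c * (\<integral>\<^sup>+ y. m y * indicator {y. pass x' y} y \<partial>lborel) \<partial>\<nu>)"
    by (rule nn_integral_cmult[symmetric]) measurable
  also have "\<dots> \<le> (\<integral>\<^sup>+ x'. \<Lambda> * e \<partial>\<nu>)"
  proof (rule nn_integral_mono)
    fix x'
    have "{y. pass x' y} \<in> sets borel" "w x' \<in> borel_measurable borel"
      by measurable
    then show "c * (\<integral>\<^sup>+ y. m y * indicator {y. pass x' y} y \<partial>lborel) \<le> \<Lambda> * e"
      by (intro nn_integral_acceptance_region_le[where q=q and w="w x'", OF m_meas])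
         (simp_all add: m_def mixture_le pass_le w_density)
  qed
  also have "\<dots> = \<Lambda> * e"
    by (simp add: \<nu>.emeasure_space_1)
  finally show ?thesis .
qed

lemma unique_passing_decoder:
  fixes test :: "'i::countable \<Rightarrow> 'y \<Rightarrow> bool" and I :: "'i set"
  assumes fin: "finite I" and d: "d \<in> I" and test_meas: "\<And>t. Measurable.pred M (test t)"
  defines "dec \<equiv> (\<lambda>y. if \<exists>!t. t \<in> I \<and> test t y then THE t. t \<in> I \<and> test t y else d)"
  shows "dec \<in> measurable M (count_space UNIV)"
    and "\<And>y. dec y \<in> I"
    and "\<And>s y. s \<in> I \<Longrightarrow> dec y \<noteq> s \<Longrightarrow> \<not> test s y \<or> (\<exists>t\<in>I - {s}. test t y)"
proof -
  define unique where "unique y \<longleftrightarrow> (\<exists>t\<in>I. test t y \<and> (\<forall>t'\<in>I. test t' y \<longrightarrow> t' = t))" for y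
  have unique_eq: "unique y \<longleftrightarrow> (\<exists>!t. t \<in> I \<and> test t y)" for y
    unfolding unique_def by blast
  have unique_meas: "Measurable.pred M unique"
    unfolding unique_def
    by (intro pred_intros_logic pred_intros_finite(3,4) fin test_meas) (simp_all add: pred_def)
  have dec_eq_iff: "dec y = a \<longleftrightarrow> (unique y \<and> a \<in> I \<and> test a y) \<or> (\<not> unique y \<and> a = d)" for y a
  proof (cases "unique y")
    case True
    then obtain t where t: "t \<in> I" "test t y" "\<forall>t'\<in>I. test t' y \<longrightarrow> t' = t" unfolding unique_def by blast
    have th: "(THE t'. t' \<in> I \<and> test t' y) = t"
      by (rule the_equality) (use t in blast)+
    have "dec y = t" unfolding dec_def using unique_eq[of y] True th by simp
    then show ?thesis using True t by blast
  next
    case False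
    then show ?thesis unfolding dec_def using unique_eq[of y] by (simp add: eq_commute)
  qed
  show "dec \<in> measurable M (count_space UNIV)"
    unfolding measurable_count_space_eq2_countable
  proof (intro conjI ballI)
    fix a :: 'i
    have "Measurable.pred M (\<lambda>y. (unique y \<and> a \<in> I \<and> test a y) \<or> (\<not> unique y \<and> a = d))"
      by (intro pred_intros_logic unique_meas test_meas) (simp_all add: pred_def)
    then have "{y \<in> space M. dec y = a} \<in> sets M"
      unfolding dec_eq_iff pred_def .
    moreover have "dec -` {a} \<inter> space M = {y \<in> space M. dec y = a}" by auto
    ultimately show "dec -` {a} \<inter> space M \<in> sets M" by simp
  qed simp
  show "dec y \<in> I" for y
  proof (cases "\<exists>!t. t \<in> I \<and> test t y")
    case True
    then show ?thesis unfolding dec_def using theI'[OF True] by simp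
  qed (use d dec_def in simp)
  show "\<not> test s y \<or> (\<exists>t\<in>I - {s}. test t y)" if "s \<in> I" "dec y \<noteq> s" for s y
  proof (rule ccontr)
    assume "\<not> (\<not> test s y \<or> (\<exists>t\<in>I - {s}. test t y))"
    then have "test s y" "\<forall>t\<in>I - {s}. \<not> test t y" by auto
    then have "unique y" unfolding unique_def using that by blast
    then have "dec y = s" using dec_eq_iff[of y s] \<open>test s y\<close> that by simp
    with that show False by simp
  qed
qed

section \<open>Random coding\<close>

lemma scaled_ln_ratio_le_iff:
  fixes n :: real
  assumes "n > 0" "a > 0" "b > 0" "m > 0"
  shows "(1 / n) * ln (a / b) \<le> (1 / n) * ln m + \<gamma> \<longleftrightarrow> \<not> m * exp (n * \<gamma>) * b < a"
proof -
  have "(1 / n) * ln (a / b) \<le> (1 / n) * ln m + \<gamma> \<longleftrightarrow> ln (a / b) \<le> ln (m * exp (n * \<gamma>))"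
    using assms by (simp add: ln_mult field_simps)
  also have "\<dots> \<longleftrightarrow> a \<le> m * exp (n * \<gamma>) * b"
    using assms by (simp add: pos_divide_le_eq)
  finally show ?thesis
    by (simp add: not_less)
qed

text \<open>\<open>K\<close> is the conditional law of \<open>X1\<close> given \<open>X2\<close>, \<open>Q1\<close> and \<open>Q\<close> are the densities
  \<open>Q_{Y|X2}\<close> and \<open>Q_Y\<close>; their positivity singles out the non-degenerate case.\<close>

locale mac_random_coding =
  fixes P :: "((real^'n) \<times> (real^'n)) measure" and K :: "real^'n \<Rightarrow> (real^'n) measure"
    and Q1 :: "real^'n \<Rightarrow> real^'n \<Rightarrow> real" and Q :: "real^'n \<Rightarrow> real"
    and M1 M2 :: nat and \<gamma> :: real
  assumes M1_pos: "M1 > 0" and M2_pos: "M2 > 0"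
    and P_prob: "prob_space P" and sets_P[measurable_cong]: "sets P = sets borel"
    and K_meas[measurable]: "K \<in> measurable borel (subprob_algebra borel)"
    and K_prob: "\<And>x2. prob_space (K x2)"
    and P_eq_bind: "P = distr P borel snd \<bind> (\<lambda>x2. distr (K x2) borel (\<lambda>x1. (x1, x2)))"
    and Q1_pos: "\<And>y x2. Q1 y x2 > 0"
    and Q1_meas: "(\<lambda>(y, x2). Q1 y x2) \<in> borel_measurable borel"
    and Q_pos: "\<And>y. Q y > 0"
    and Q_meas[measurable]: "Q \<in> borel_measurable borel"
begin

lemmas measurable_Q1[measurable (raw)] = measurable_curried_borel[OF Q1_meas[unfolded case_prod_beta']]

sublocale P: prob_space P
  by (rule P_prob)

lemma sets_K[simp, measurable_cong]: "sets (K x2) = sets borel"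
  using measurable_space[OF K_meas, of x2] by (simp add: space_subprob_algebra)

lemma space_P[simp]: "space P = UNIV"
  using sets_eq_imp_space_eq[OF sets_P] by simp

definition PX2 :: "(real^'n) measure" where
  "PX2 = distr P borel snd"

lemma sets_PX2[simp, measurable_cong]: "sets PX2 = sets borel"
  by (simp add: PX2_def)

lemma space_PX2[simp]: "space PX2 = UNIV"
  by (simp add: PX2_def)

lemma prob_space_PX2: "prob_space PX2"
  unfolding PX2_def using P_prob by (rule prob_space.prob_space_distr) measurable

lemma measurable_K_slice: "(\<lambda>x2. distr (K x2) borel (\<lambda>x1. (x1, x2))) \<in> measurable PX2 (subprob_algebra borel)"
  by (rule measurable_distr2[where M=borel]) measurable

lemma nn_integral_P:
  assumes [measurable]: "h \<in> borel_measurable borel"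
  shows "(\<integral>\<^sup>+ x. h x \<partial>P) = (\<integral>\<^sup>+ x2. \<integral>\<^sup>+ x1. h (x1, x2) \<partial>K x2 \<partial>PX2)"
proof -
  have "(\<integral>\<^sup>+ x. h x \<partial>P) = (\<integral>\<^sup>+ x2. \<integral>\<^sup>+ x. h x \<partial>distr (K x2) borel (\<lambda>x1. (x1, x2)) \<partial>PX2)"
    by (subst P_eq_bind, unfold PX2_def[symmetric]) (rule nn_integral_bind[OF _ measurable_K_slice], measurable)
  also have "\<dots> = (\<integral>\<^sup>+ x2. \<integral>\<^sup>+ x1. h (x1, x2) \<partial>K x2 \<partial>PX2)"
    by (intro nn_integral_cong nn_integral_distr) measurable
  finally show ?thesis .
qed

lemma AE_P_imp_AE_K:
  assumes "AE x in P. R x" and [measurable]: "Measurable.pred borel R"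
  shows "AE x2 in PX2. AE x1 in K x2. R (x1, x2)"
proof -
  have "AE x2 in PX2. AE x in distr (K x2) borel (\<lambda>x1. (x1, x2)). R x"
    using assms(1) by (subst (asm) P_eq_bind, unfold PX2_def[symmetric]) (simp add: AE_bind[OF measurable_K_slice])
  moreover have "AE x1 in K x2. R (x1, x2)"
    if "AE x in distr (K x2) borel (\<lambda>x1. (x1, x2)). R x" for x2
    using that by (subst (asm) AE_distr_iff) measurable
  ultimately show ?thesis
    by (auto elim: eventually_mono)
qed

lemma measurable_joint_kernel:
  "(\<lambda>x. distr (chan (fst x) (snd x)) borel (\<lambda>y. (x, y))) \<in> measurable P (subprob_algebra borel)"
  by (rule measurable_distr2[where M=borel]) measurable

lemma prob_space_joint_XY: "prob_space (joint_XY P)"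
  unfolding joint_XY_def
proof (rule prob_space.prob_space_bind[OF P_prob _ measurable_joint_kernel])
  show "AE x in P. prob_space (distr (chan (fst x) (snd x)) borel (\<lambda>y. (x, y)))"
    by (intro AE_I2 prob_space.prob_space_distr prob_space_chan) measurable
qed

lemma emeasure_joint_XY:
  assumes [measurable]: "S \<in> sets borel"
  shows "emeasure (joint_XY P) S
    = (\<integral>\<^sup>+ x. \<integral>\<^sup>+ y. ennreal (Wn y (fst x) (snd x)) * indicator (Pair x -` S) y \<partial>lborel \<partial>P)"
proof -
  have [measurable]: "Pair x -` S \<in> sets borel" for x :: "(real^'n) \<times> (real^'n)"
  proof -
    have "(\<lambda>y::real^'n. (x, y)) \<in> measurable borel borel"
      by measurable
    from measurable_sets[OF this assms] show ?thesis
      by (simp add: vimage_def)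
  qed
  show ?thesis
    unfolding joint_XY_def
    by (subst emeasure_bind[OF _ measurable_joint_kernel assms])
       (auto intro!: nn_integral_cong simp: emeasure_distr emeasure_chan)
qed

text \<open>The two information-density tests, \<open>(1/n) log (W\<^sup>n / Q1) > (1/n) log M1 + \<gamma>\<close> and
  \<open>(1/n) log (W\<^sup>n / Q) > (1/n) log (M1 M2) + \<gamma>\<close>, in exponentiated form
  (see \<open>error_event_eq_tests\<close>).\<close>

definition test1 :: "real^'n \<Rightarrow> real^'n \<Rightarrow> real^'n \<Rightarrow> bool" where
  "test1 x1 x2 y \<longleftrightarrow> real M1 * exp (real CARD('n) * \<gamma>) * Q1 y x2 < Wn y x1 x2"

definition test2 :: "real^'n \<Rightarrow> real^'n \<Rightarrow> real^'n \<Rightarrow> bool" where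
  "test2 x1 x2 y \<longleftrightarrow> real M1 * real M2 * exp (real CARD('n) * \<gamma>) * Q y < Wn y x1 x2"

lemma measurable_test1[measurable (raw)]:
  fixes f g h :: "'a \<Rightarrow> real^'n"
  assumes [measurable]: "f \<in> borel_measurable M" "g \<in> borel_measurable M" "h \<in> borel_measurable M"
  shows "Measurable.pred M (\<lambda>x. test1 (f x) (g x) (h x))"
  unfolding test1_def by measurable

lemma measurable_test2[measurable (raw)]:
  fixes f g h :: "'a \<Rightarrow> real^'n"
  assumes [measurable]: "f \<in> borel_measurable M" "g \<in> borel_measurable M" "h \<in> borel_measurable M"
  shows "Measurable.pred M (\<lambda>x. test2 (f x) (g x) (h x))"
  unfolding test2_def by measurable

lemma test1_imp_le:
  assumes "test1 x1 x2 y"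
  shows "ennreal (real M1) * ennreal (Q1 y x2)
    \<le> ennreal (exp (- real CARD('n) * \<gamma>)) * ennreal (Wn y x1 x2)"
proof -
  have "real M1 * Q1 y x2 = exp (- real CARD('n) * \<gamma>) * (real M1 * exp (real CARD('n) * \<gamma>) * Q1 y x2)"
    by (simp add: exp_minus field_simps)
  also have "\<dots> \<le> exp (- real CARD('n) * \<gamma>) * Wn y x1 x2"
    using assms unfolding test1_def by (intro mult_left_mono) auto
  finally have "ennreal (real M1 * Q1 y x2) \<le> ennreal (exp (- real CARD('n) * \<gamma>) * Wn y x1 x2)"
    by (rule ennreal_leI)
  then show ?thesis
    using Q1_pos[of y x2] Wn_pos[of y x1 x2] by (simp add: ennreal_mult)
qed

lemma test2_imp_le:
  assumes "test2 x1 x2 y"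
  shows "ennreal (real M1 * real M2) * ennreal (Q y)
    \<le> ennreal (exp (- real CARD('n) * \<gamma>)) * ennreal (Wn y x1 x2)"
proof -
  have "real M1 * real M2 * Q y
      = exp (- real CARD('n) * \<gamma>) * (real M1 * real M2 * exp (real CARD('n) * \<gamma>) * Q y)"
    by (simp add: exp_minus field_simps)
  also have "\<dots> \<le> exp (- real CARD('n) * \<gamma>) * Wn y x1 x2"
    using assms unfolding test2_def by (intro mult_left_mono) auto
  finally have "ennreal (real M1 * real M2 * Q y) \<le> ennreal (exp (- real CARD('n) * \<gamma>) * Wn y x1 x2)"
    by (rule ennreal_leI)
  then show ?thesis
    using Q_pos[of y] Wn_pos[of y x1 x2] by (simp add: ennreal_mult)
qed

definition \<Lambda>1 :: ennreal where
  "\<Lambda>1 = (SUP x2. SUP y. (\<integral>\<^sup>+ x1. ennreal (Wn y x1 x2) \<partial>K x2) / ennreal (Q1 y x2))"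

definition \<Lambda>12 :: ennreal where
  "\<Lambda>12 = (SUP y. (\<integral>\<^sup>+ x. ennreal (Wn y (fst x) (snd x)) \<partial>P) / ennreal (Q y))"

lemma nn_integral_K_Wn_le: "(\<integral>\<^sup>+ x1. ennreal (Wn y x1 x2) \<partial>K x2) \<le> \<Lambda>1 * ennreal (Q1 y x2)"
proof -
  have "(\<integral>\<^sup>+ x1. ennreal (Wn y x1 x2) \<partial>K x2) / ennreal (Q1 y x2) \<le> \<Lambda>1"
    unfolding \<Lambda>1_def by (intro SUP_upper2[of x2] SUP_upper) auto
  then have "(\<integral>\<^sup>+ x1. ennreal (Wn y x1 x2) \<partial>K x2) / ennreal (Q1 y x2) * ennreal (Q1 y x2)
      \<le> \<Lambda>1 * ennreal (Q1 y x2)"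
    by (rule mult_right_mono) simp
  then show ?thesis
    using Q1_pos[of y x2] by (simp add: ennreal_divide_times)
qed

lemma nn_integral_P_Wn_le: "(\<integral>\<^sup>+ x. ennreal (Wn y (fst x) (snd x)) \<partial>P) \<le> \<Lambda>12 * ennreal (Q y)"
proof -
  have "(\<integral>\<^sup>+ x. ennreal (Wn y (fst x) (snd x)) \<partial>P) / ennreal (Q y) \<le> \<Lambda>12"
    unfolding \<Lambda>12_def by (rule SUP_upper) simp
  then have "(\<integral>\<^sup>+ x. ennreal (Wn y (fst x) (snd x)) \<partial>P) / ennreal (Q y) * ennreal (Q y)
      \<le> \<Lambda>12 * ennreal (Q y)"
    by (rule mult_right_mono) simp
  then show ?thesis
    using Q_pos[of y] by (simp add: ennreal_divide_times)
qed

text \<open>For transmitted codewords \<open>(x1, x2)\<close>: the probability that they fail a test, and that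
  the codewords of another message pass test 1 (same \<open>x2\<close>) resp. test 2.\<close>

definition miss :: "real^'n \<Rightarrow> real^'n \<Rightarrow> ennreal" where
  "miss x1 x2 = (\<integral>\<^sup>+ y. ennreal (Wn y x1 x2) * indicator {y. \<not> (test1 x1 x2 y \<and> test2 x1 x2 y)} y \<partial>lborel)"

definition alarm1 :: "real^'n \<Rightarrow> real^'n \<Rightarrow> real^'n \<Rightarrow> ennreal" where
  "alarm1 x1 x2 x1' = (\<integral>\<^sup>+ y. ennreal (Wn y x1 x2) * indicator {y. test1 x1' x2 y} y \<partial>lborel)"

definition alarm2 :: "real^'n \<Rightarrow> real^'n \<Rightarrow> real^'n \<Rightarrow> real^'n \<Rightarrow> ennreal" where
  "alarm2 x1 x2 x1' x2' = (\<integral>\<^sup>+ y. ennreal (Wn y x1 x2) * indicator {y. test2 x1' x2' y} y \<partial>lborel)"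

lemma measurable_miss[measurable (raw)]:
  fixes f g :: "'a \<Rightarrow> real^'n"
  assumes [measurable]: "f \<in> borel_measurable M" "g \<in> borel_measurable M"
  shows "(\<lambda>z. miss (f z) (g z)) \<in> borel_measurable M"
  unfolding miss_def by measurable

lemma measurable_alarm1[measurable (raw)]:
  fixes f g h :: "'a \<Rightarrow> real^'n"
  assumes [measurable]: "f \<in> borel_measurable M" "g \<in> borel_measurable M" "h \<in> borel_measurable M"
  shows "(\<lambda>z. alarm1 (f z) (g z) (h z)) \<in> borel_measurable M"
  unfolding alarm1_def by measurable

lemma measurable_alarm2[measurable (raw)]:
  fixes f g h k :: "'a \<Rightarrow> real^'n"
  assumes [measurable]: "f \<in> borel_measurable M" "g \<in> borel_measurable M" "h \<in> borel_measurable M"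
    "k \<in> borel_measurable M"
  shows "(\<lambda>z. alarm2 (f z) (g z) (h z) (k z)) \<in> borel_measurable M"
  unfolding alarm2_def by measurable

definition avg_miss :: "real^'n \<Rightarrow> ennreal" where
  "avg_miss x2 = (\<integral>\<^sup>+ x1. miss x1 x2 \<partial>K x2)"

definition avg_alarm1 :: "real^'n \<Rightarrow> ennreal" where
  "avg_alarm1 x2 = (\<integral>\<^sup>+ x1. \<integral>\<^sup>+ x1'. alarm1 x1 x2 x1' \<partial>K x2 \<partial>K x2)"

definition avg_alarm2 :: "real^'n \<Rightarrow> real^'n \<Rightarrow> ennreal" where
  "avg_alarm2 x2 x2' = (\<integral>\<^sup>+ x1. \<integral>\<^sup>+ x1'. alarm2 x1 x2 x1' x2' \<partial>K x2' \<partial>K x2)"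

declare nn_integral_measurable_subprob_algebra2[measurable (raw)]

lemma measurable_avg_miss[measurable]: "avg_miss \<in> borel_measurable borel"
  unfolding avg_miss_def by measurable

lemma measurable_avg_alarm1[measurable]: "avg_alarm1 \<in> borel_measurable borel"
  unfolding avg_alarm1_def by measurable

lemma measurable_avg_alarm2[measurable (raw)]:
  fixes f g :: "'a \<Rightarrow> real^'n"
  assumes [measurable]: "f \<in> borel_measurable M" "g \<in> borel_measurable M"
  shows "(\<lambda>z. avg_alarm2 (f z) (g z)) \<in> borel_measurable M"
  unfolding avg_alarm2_def by measurable

definition error_event :: "(((real^'n) \<times> (real^'n)) \<times> (real^'n)) set" where
  "error_event = {((x1, x2), y).
     (1 / real CARD('n)) * ln (Wn y x1 x2 / Q1 y x2) \<le> (1 / real CARD('n)) * ln (real M1) + \<gamma>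
   \<or> (1 / real CARD('n)) * ln (Wn y x1 x2 / Q y) \<le> (1 / real CARD('n)) * ln (real M1 * real M2) + \<gamma>}"

lemma error_event_eq_tests: "error_event = {((x1, x2), y). \<not> (test1 x1 x2 y \<and> test2 x1 x2 y)}"
proof -
  have "(1 / real CARD('n)) * ln (Wn y x1 x2 / Q1 y x2) \<le> (1 / real CARD('n)) * ln (real M1) + \<gamma>
      \<longleftrightarrow> \<not> test1 x1 x2 y"
    "(1 / real CARD('n)) * ln (Wn y x1 x2 / Q y) \<le> (1 / real CARD('n)) * ln (real M1 * real M2) + \<gamma>
      \<longleftrightarrow> \<not> test2 x1 x2 y" for x1 x2 y
    unfolding test1_def test2_def
    by (rule scaled_ln_ratio_le_iff; simp add: Wn_pos Q1_pos Q_pos M1_pos M2_pos)+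
  then show ?thesis
    unfolding error_event_def by auto
qed

lemma error_event_sets[measurable]: "error_event \<in> sets borel"
proof -
  have "Measurable.pred borel (\<lambda>p :: ((real^'n) \<times> (real^'n)) \<times> (real^'n).
      \<not> (test1 (fst (fst p)) (snd (fst p)) (snd p) \<and> test2 (fst (fst p)) (snd (fst p)) (snd p)))"
    by measurable
  moreover have "error_event = {p \<in> space borel.
      \<not> (test1 (fst (fst p)) (snd (fst p)) (snd p) \<and> test2 (fst (fst p)) (snd (fst p)) (snd p))}"
    by (auto simp: error_event_eq_tests)
  ultimately show ?thesis
    by (simp add: pred_def)
qed

lemma nn_integral_avg_miss: "(\<integral>\<^sup>+ x2. avg_miss x2 \<partial>PX2) = emeasure (joint_XY P) error_event"
  unfolding avg_miss_def emeasure_joint_XY[OF error_event_sets]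
  by (subst nn_integral_P) (measurable, auto simp: miss_def error_event_eq_tests intro!: nn_integral_cong)

lemma avg_alarm1_le: "of_nat M1 * avg_alarm1 x2 \<le> \<Lambda>1 * ennreal (exp (- real CARD('n) * \<gamma>))"
  unfolding avg_alarm1_def alarm1_def ennreal_of_nat_eq_real_of_nat
  by (rule threshold_test_change_of_measure[OF K_prob K_prob sets_K sets_K _ _
        nn_integral_K_Wn_le test1_imp_le nn_integral_Wn]) measurable

lemma nn_integral_avg_alarm2:
  "(\<integral>\<^sup>+ x2. \<integral>\<^sup>+ x2'. avg_alarm2 x2 x2' \<partial>PX2 \<partial>PX2)
    = (\<integral>\<^sup>+ x. \<integral>\<^sup>+ x'. alarm2 (fst x) (snd x) (fst x') (snd x') \<partial>P \<partial>P)"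
proof -
  have "(\<integral>\<^sup>+ x2'. avg_alarm2 x2 x2' \<partial>PX2) = (\<integral>\<^sup>+ x1. \<integral>\<^sup>+ x'. alarm2 x1 x2 (fst x') (snd x') \<partial>P \<partial>K x2)"
    for x2
  proof -
    interpret pair_sigma_finite "K x2" PX2
      using K_prob prob_space_PX2 by (simp add: pair_sigma_finite_def prob_space_imp_sigma_finite)
    have "(\<integral>\<^sup>+ x2'. avg_alarm2 x2 x2' \<partial>PX2)
        = (\<integral>\<^sup>+ x1. \<integral>\<^sup>+ x2'. \<integral>\<^sup>+ x1'. alarm2 x1 x2 x1' x2' \<partial>K x2' \<partial>PX2 \<partial>K x2)"
      unfolding avg_alarm2_def by (rule Fubini') measurable
    also have "\<dots> = (\<integral>\<^sup>+ x1. \<integral>\<^sup>+ x'. alarm2 x1 x2 (fst x') (snd x') \<partial>P \<partial>K x2)"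
      by (intro nn_integral_cong) (subst nn_integral_P; measurable; simp)
    finally show ?thesis .
  qed
  moreover have "(\<lambda>x. \<integral>\<^sup>+ x'. alarm2 (fst x) (snd x) (fst x') (snd x') \<partial>P) \<in> borel_measurable borel"
    by (rule P.borel_measurable_nn_integral) measurable
  ultimately show ?thesis
    by (simp add: nn_integral_P)
qed

lemma nn_integral_avg_alarm2_le:
  "of_nat M1 * of_nat M2 * (\<integral>\<^sup>+ x2. \<integral>\<^sup>+ x2'. avg_alarm2 x2 x2' \<partial>PX2 \<partial>PX2)
    \<le> \<Lambda>12 * ennreal (exp (- real CARD('n) * \<gamma>))"
  unfolding nn_integral_avg_alarm2 alarm2_def
  by (simp only: ennreal_of_nat_eq_real_of_nat ennreal_mult[symmetric] of_nat_0_le_iff,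
      rule threshold_test_change_of_measure[OF P_prob P_prob sets_P sets_P _ _
        nn_integral_P_Wn_le test2_imp_le nn_integral_Wn]) measurable

definition alarm :: "(nat \<Rightarrow> real^'n) \<Rightarrow> nat \<times> nat \<Rightarrow> nat \<times> nat \<Rightarrow> real^'n \<Rightarrow> real^'n \<Rightarrow> ennreal" where
  "alarm x2s s t x1 x1' =
    (if snd s = snd t then alarm1 x1 (x2s (snd s)) x1' else alarm2 x1 (x2s (snd s)) x1' (x2s (snd t)))"

lemma exists_x1_codewords:
  assumes "\<And>m2. m2 < M2 \<Longrightarrow> AE x1 in K (x2s m2). R x1 (x2s m2)"
  shows "\<exists>x1s. (\<forall>s\<in>{..<M1} \<times> {..<M2}. R (x1s s) (x2s (snd s))) \<and>
    (\<Sum>s\<in>{..<M1} \<times> {..<M2}. miss (x1s s) (x2s (snd s)))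
      + (\<Sum>s\<in>{..<M1} \<times> {..<M2}. \<Sum>t\<in>{..<M1} \<times> {..<M2} - {s}. alarm x2s s t (x1s s) (x1s t))
    \<le> (\<Sum>m2<M2. of_nat M1 * (avg_miss (x2s m2) + of_nat (M1 - 1) * avg_alarm1 (x2s m2)))
      + (\<Sum>m2<M2. \<Sum>m2'\<in>{..<M2} - {m2}. of_nat M1 * of_nat M1 * avg_alarm2 (x2s m2) (x2s m2'))"
proof -
  have alarm_meas: "(\<lambda>(x, x'). alarm x2s s t x x') \<in> borel_measurable (K (x2s (snd s)) \<Otimes>\<^sub>M K (x2s (snd t)))"
    for s t
    unfolding alarm_def by measurable
  obtain x1s where x1s: "\<forall>s\<in>{..<M1} \<times> {..<M2}. x1s s \<in> space (K (x2s (snd s))) \<and> R (x1s s) (x2s (snd s))"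
    and le: "(\<Sum>s\<in>{..<M1} \<times> {..<M2}. miss (x1s s) (x2s (snd s)))
        + (\<Sum>s\<in>{..<M1} \<times> {..<M2}. \<Sum>t\<in>{..<M1} \<times> {..<M2} - {s}. alarm x2s s t (x1s s) (x1s t))
      \<le> (\<Sum>s\<in>{..<M1} \<times> {..<M2}. avg_miss (x2s (snd s)))
        + (\<Sum>s\<in>{..<M1} \<times> {..<M2}. \<Sum>t\<in>{..<M1} \<times> {..<M2} - {s}.
            \<integral>\<^sup>+ x. \<integral>\<^sup>+ x'. alarm x2s s t x x' \<partial>K (x2s (snd t)) \<partial>K (x2s (snd s)))"
    unfolding avg_miss_def
  proof (atomize_elim, rule exists_pairwise_sum_le_expectation)
    show "finite ({..<M1} \<times> {..<M2})"
      by simp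
    show "prob_space (K (x2s (snd s)))" for s
      by (rule K_prob)
    show "AE x in K (x2s (snd s)). R x (x2s (snd s))" if "s \<in> {..<M1} \<times> {..<M2}" for s
      using assms[of "snd s"] that by (simp add: mem_Times_iff)
    show "(\<lambda>x. miss x (x2s (snd s))) \<in> borel_measurable (K (x2s (snd s)))" for s
      by measurable
    show "(\<lambda>(x, x'). alarm x2s s t x x') \<in> borel_measurable (K (x2s (snd s)) \<Otimes>\<^sub>M K (x2s (snd t)))"
      for s t
      by (rule alarm_meas)
  qed
  have "(\<integral>\<^sup>+ x. \<integral>\<^sup>+ x'. alarm x2s s t x x' \<partial>K (x2s (snd t)) \<partial>K (x2s (snd s)))
      = (if snd s = snd t then avg_alarm1 (x2s (snd s)) else avg_alarm2 (x2s (snd s)) (x2s (snd t)))" for s t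
    by (simp add: alarm_def avg_alarm1_def avg_alarm2_def)
  then have "(\<Sum>s\<in>{..<M1} \<times> {..<M2}. avg_miss (x2s (snd s)))
        + (\<Sum>s\<in>{..<M1} \<times> {..<M2}. \<Sum>t\<in>{..<M1} \<times> {..<M2} - {s}.
            \<integral>\<^sup>+ x. \<integral>\<^sup>+ x'. alarm x2s s t x x' \<partial>K (x2s (snd t)) \<partial>K (x2s (snd s)))
      = (\<Sum>m2<M2. of_nat M1 * (avg_miss (x2s m2) + of_nat (M1 - 1) * avg_alarm1 (x2s m2)))
        + (\<Sum>m2<M2. \<Sum>m2'\<in>{..<M2} - {m2}. of_nat M1 * of_nat M1 * avg_alarm2 (x2s m2) (x2s m2'))"
    by (simp only: sum_offdiag_grid[of "\<lambda>m2. avg_miss (x2s m2)" M1 M2 "\<lambda>m2. avg_alarm1 (x2s m2)"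
        "\<lambda>m2 m2'. avg_alarm2 (x2s m2) (x2s m2')"])
  with le x1s show ?thesis
    by (intro exI[of _ x1s] conjI) auto
qed

lemma exists_x2_codewords:
  assumes "AE x2 in PX2. AE x1 in K x2. R x1 x2"
  shows "\<exists>x2s. (\<forall>m2<M2. AE x1 in K (x2s m2). R x1 (x2s m2)) \<and>
    (\<Sum>m2<M2. of_nat M1 * (avg_miss (x2s m2) + of_nat (M1 - 1) * avg_alarm1 (x2s m2)))
      + (\<Sum>m2<M2. \<Sum>m2'\<in>{..<M2} - {m2}. of_nat M1 * of_nat M1 * avg_alarm2 (x2s m2) (x2s m2'))
    \<le> of_nat M1 * of_nat M2 * (emeasure (joint_XY P) error_event
      + \<Lambda>1 * ennreal (exp (- real CARD('n) * \<gamma>)) + \<Lambda>12 * ennreal (exp (- real CARD('n) * \<gamma>)))"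
proof -
  interpret PX2: prob_space PX2
    by (rule prob_space_PX2)
  define e where "e = ennreal (exp (- real CARD('n) * \<gamma>))"
  define F where "F x2 = of_nat M1 * (avg_miss x2 + of_nat (M1 - 1) * avg_alarm1 x2)" for x2
  define B where "B = (\<integral>\<^sup>+ x2. \<integral>\<^sup>+ x2'. avg_alarm2 x2 x2' \<partial>PX2 \<partial>PX2)"
  obtain x2s where x2s: "\<forall>m2\<in>{..<M2}. x2s m2 \<in> space PX2 \<and> (AE x1 in K (x2s m2). R x1 (x2s m2))"
    and le: "(\<Sum>m2<M2. F (x2s m2))
        + (\<Sum>m2<M2. \<Sum>m2'\<in>{..<M2} - {m2}. of_nat M1 * of_nat M1 * avg_alarm2 (x2s m2) (x2s m2'))
      \<le> (\<Sum>m2<M2. \<integral>\<^sup>+ x2. F x2 \<partial>PX2) + (\<Sum>m2<M2. \<Sum>m2'\<in>{..<M2} - {m2}. of_nat M1 * of_nat M1 * B)"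
    using exists_pairwise_sum_le_expectation[of "{..<M2}" "\<lambda>_. PX2" "\<lambda>_ x2. AE x1 in K x2. R x1 x2"
        "\<lambda>_. F" "\<lambda>_ _ x2 x2'. of_nat M1 * of_nat M1 * avg_alarm2 x2 x2'"] assms prob_space_PX2
    unfolding F_def B_def by (fastforce simp: nn_integral_cmult)
  have "of_nat (M1 - 1) * avg_alarm1 x2 \<le> \<Lambda>1 * e" for x2
    using avg_alarm1_le[of x2] unfolding e_def
    by (rule order_trans[rotated]) (intro mult_right_mono, simp_all)
  then have "of_nat (M1 - 1) * (\<integral>\<^sup>+ x2. avg_alarm1 x2 \<partial>PX2) \<le> \<Lambda>1 * e"
    using nn_integral_mono[of PX2 "\<lambda>x2. of_nat (M1 - 1) * avg_alarm1 x2" "\<lambda>_. \<Lambda>1 * e"]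
    by (simp add: nn_integral_cmult PX2.emeasure_space_1[simplified])
  then have F_le: "(\<integral>\<^sup>+ x2. F x2 \<partial>PX2) \<le> of_nat M1 * (emeasure (joint_XY P) error_event + \<Lambda>1 * e)"
    unfolding F_def nn_integral_avg_miss[symmetric]
    by (simp add: nn_integral_cmult nn_integral_add add_left_mono mult_left_mono)
  have B_le: "of_nat (M2 - 1) * (of_nat M1 * of_nat M1 * B) \<le> of_nat M1 * (\<Lambda>12 * e)"
  proof -
    have "of_nat (M2 - 1) * (of_nat M1 * of_nat M1 * B) \<le> of_nat M2 * (of_nat M1 * of_nat M1 * B)"
      by (intro mult_right_mono) simp_all
    also have "\<dots> = of_nat M1 * (of_nat M1 * of_nat M2 * B)"
      by (simp add: ac_simps)
    also have "\<dots> \<le> of_nat M1 * (\<Lambda>12 * e)"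
      using nn_integral_avg_alarm2_le unfolding B_def e_def by (rule mult_left_mono) simp
    finally show ?thesis .
  qed
  have "(\<Sum>m2<M2. \<integral>\<^sup>+ x2. F x2 \<partial>PX2) + (\<Sum>m2<M2. \<Sum>m2'\<in>{..<M2} - {m2}. of_nat M1 * of_nat M1 * B)
      = of_nat M2 * (\<integral>\<^sup>+ x2. F x2 \<partial>PX2) + of_nat M2 * (of_nat (M2 - 1) * (of_nat M1 * of_nat M1 * B))"
    unfolding sum_offdiag_const[OF finite_lessThan] by simp
  also have "\<dots> \<le> of_nat M2 * (of_nat M1 * (emeasure (joint_XY P) error_event + \<Lambda>1 * e))
      + of_nat M2 * (of_nat M1 * (\<Lambda>12 * e))"
    by (rule add_mono[OF mult_left_mono[OF F_le] mult_left_mono[OF B_le]]) simp_all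
  also have "\<dots> = of_nat M1 * of_nat M2 * (emeasure (joint_XY P) error_event + \<Lambda>1 * e + \<Lambda>12 * e)"
    by (simp only: distrib_left[symmetric] mult.assoc mult.left_commute)
  finally have bound: "(\<Sum>m2<M2. F (x2s m2))
        + (\<Sum>m2<M2. \<Sum>m2'\<in>{..<M2} - {m2}. of_nat M1 * of_nat M1 * avg_alarm2 (x2s m2) (x2s m2'))
      \<le> of_nat M1 * of_nat M2 * (emeasure (joint_XY P) error_event + \<Lambda>1 * e + \<Lambda>12 * e)"
    by (rule order_trans[OF le])
  show ?thesis
  proof (intro exI[of _ x2s] conjI)
    show "\<forall>m2<M2. AE x1 in K (x2s m2). R x1 (x2s m2)"
      using x2s by simp
  qed (use bound in \<open>simp only: F_def e_def\<close>)
qed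

definition accepts :: "(nat \<times> nat \<Rightarrow> real^'n) \<Rightarrow> (nat \<Rightarrow> real^'n) \<Rightarrow> nat \<times> nat \<Rightarrow> real^'n \<Rightarrow> bool" where
  "accepts x1s x2s t y \<longleftrightarrow> test1 (x1s t) (x2s (snd t)) y \<and> test2 (x1s t) (x2s (snd t)) y"

lemma measurable_accepts[measurable]: "Measurable.pred borel (accepts x1s x2s t)"
  unfolding accepts_def by measurable

lemma emeasure_decoding_error_le:
  assumes "s \<in> {..<M1} \<times> {..<M2}"
    and "\<And>y. dec y \<noteq> s \<Longrightarrow>
      \<not> accepts x1s x2s s y \<or> (\<exists>t\<in>{..<M1} \<times> {..<M2} - {s}. accepts x1s x2s t y)"
  shows "emeasure (chan (x1s s) (x2s (snd s))) {y. dec y \<noteq> s}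
    \<le> miss (x1s s) (x2s (snd s)) + (\<Sum>t\<in>{..<M1} \<times> {..<M2} - {s}. alarm x2s s t (x1s s) (x1s t))"
proof -
  define ch where "ch = chan (x1s s) (x2s (snd s))"
  have [measurable]: "{y. accepts x1s x2s t y} \<in> sets borel" "{y. \<not> accepts x1s x2s t y} \<in> sets borel" for t
    by measurable
  have "emeasure ch {y. dec y \<noteq> s}
      \<le> emeasure ch ({y. \<not> accepts x1s x2s s y} \<union> (\<Union>t\<in>{..<M1} \<times> {..<M2} - {s}. {y. accepts x1s x2s t y}))"
    using assms(2) by (intro emeasure_mono) (auto simp: ch_def)
  also have "\<dots> \<le> emeasure ch {y. \<not> accepts x1s x2s s y}
      + (\<Sum>t\<in>{..<M1} \<times> {..<M2} - {s}. emeasure ch {y. accepts x1s x2s t y})"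
    by (intro order_trans[OF emeasure_subadditive] add_left_mono emeasure_subadditive_finite)
       (auto simp: ch_def)
  also have "\<dots> \<le> miss (x1s s) (x2s (snd s)) + (\<Sum>t\<in>{..<M1} \<times> {..<M2} - {s}. alarm x2s s t (x1s s) (x1s t))"
  proof (intro add_mono sum_mono)
    show "emeasure ch {y. \<not> accepts x1s x2s s y} \<le> miss (x1s s) (x2s (snd s))"
      by (simp add: ch_def emeasure_chan miss_def accepts_def)
  next
    fix t
    have "emeasure ch {y. accepts x1s x2s t y}
        \<le> emeasure ch {y. if snd s = snd t then test1 (x1s t) (x2s (snd s)) y else test2 (x1s t) (x2s (snd t)) y}"
      by (intro emeasure_mono) (auto simp: ch_def accepts_def)
    also have "\<dots> = alarm x2s s t (x1s s) (x1s t)"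
      by (simp add: ch_def emeasure_chan alarm_def alarm1_def alarm2_def)
    finally show "emeasure ch {y. accepts x1s x2s t y} \<le> alarm x2s s t (x1s s) (x1s t)" .
  qed
  finally show ?thesis
    unfolding ch_def .
qed

lemma exists_codebook:
  fixes S1 S2 :: real
  assumes power: "AE x in P. (norm (fst x))\<^sup>2 \<le> real CARD('n) * S1 \<and> (norm (snd x))\<^sup>2 \<le> real CARD('n) * S2"
  shows "\<exists>x1s x2s. (\<forall>s\<in>{..<M1} \<times> {..<M2}.
      (norm (x1s s))\<^sup>2 \<le> real CARD('n) * S1 \<and> (norm (x2s (snd s)))\<^sup>2 \<le> real CARD('n) * S2) \<and>
    (\<Sum>s\<in>{..<M1} \<times> {..<M2}. miss (x1s s) (x2s (snd s)))
      + (\<Sum>s\<in>{..<M1} \<times> {..<M2}. \<Sum>t\<in>{..<M1} \<times> {..<M2} - {s}. alarm x2s s t (x1s s) (x1s t))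
    \<le> of_nat M1 * of_nat M2 * (emeasure (joint_XY P) error_event
      + \<Lambda>1 * ennreal (exp (- real CARD('n) * \<gamma>)) + \<Lambda>12 * ennreal (exp (- real CARD('n) * \<gamma>)))"
proof -
  define R where "R x1 x2 \<longleftrightarrow> (norm x1)\<^sup>2 \<le> real CARD('n) * S1 \<and> (norm x2)\<^sup>2 \<le> real CARD('n) * S2"
    for x1 x2 :: "real^'n"
  have "Measurable.pred borel (\<lambda>x :: (real^'n) \<times> (real^'n).
      (norm (fst x))\<^sup>2 \<le> real CARD('n) * S1 \<and> (norm (snd x))\<^sup>2 \<le> real CARD('n) * S2)"
    by measurable
  from AE_P_imp_AE_K[OF power this] have "AE x2 in PX2. AE x1 in K x2. R x1 x2"
    by (simp add: R_def)
  then obtain x2s where "\<forall>m2<M2. AE x1 in K (x2s m2). R x1 (x2s m2)"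
    and bound2: "(\<Sum>m2<M2. of_nat M1 * (avg_miss (x2s m2) + of_nat (M1 - 1) * avg_alarm1 (x2s m2)))
        + (\<Sum>m2<M2. \<Sum>m2'\<in>{..<M2} - {m2}. of_nat M1 * of_nat M1 * avg_alarm2 (x2s m2) (x2s m2'))
      \<le> of_nat M1 * of_nat M2 * (emeasure (joint_XY P) error_event
        + \<Lambda>1 * ennreal (exp (- real CARD('n) * \<gamma>)) + \<Lambda>12 * ennreal (exp (- real CARD('n) * \<gamma>)))"
    using exists_x2_codewords by blast
  then obtain x1s where "\<forall>s\<in>{..<M1} \<times> {..<M2}. R (x1s s) (x2s (snd s))"
    and bound1: "(\<Sum>s\<in>{..<M1} \<times> {..<M2}. miss (x1s s) (x2s (snd s)))
        + (\<Sum>s\<in>{..<M1} \<times> {..<M2}. \<Sum>t\<in>{..<M1} \<times> {..<M2} - {s}. alarm x2s s t (x1s s) (x1s t))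
      \<le> (\<Sum>m2<M2. of_nat M1 * (avg_miss (x2s m2) + of_nat (M1 - 1) * avg_alarm1 (x2s m2)))
        + (\<Sum>m2<M2. \<Sum>m2'\<in>{..<M2} - {m2}. of_nat M1 * of_nat M1 * avg_alarm2 (x2s m2) (x2s m2'))"
    using exists_x1_codewords by blast
  with order_trans[OF bound1 bound2] show ?thesis
    unfolding R_def by blast
qed

lemma average_decoding_error_le:
  assumes "\<And>s y. s \<in> {..<M1} \<times> {..<M2} \<Longrightarrow> dec y \<noteq> s \<Longrightarrow>
      \<not> accepts x1s x2s s y \<or> (\<exists>t\<in>{..<M1} \<times> {..<M2} - {s}. accepts x1s x2s t y)"
  shows "ennreal (1 / (real M1 * real M2) *
      (\<Sum>m1<M1. \<Sum>m2<M2. measure (chan (x1s (m1, m2)) (x2s m2)) {y. dec y \<noteq> (m1, m2)}))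
    \<le> ennreal (1 / (real M1 * real M2)) * ((\<Sum>s\<in>{..<M1} \<times> {..<M2}. miss (x1s s) (x2s (snd s)))
      + (\<Sum>s\<in>{..<M1} \<times> {..<M2}. \<Sum>t\<in>{..<M1} \<times> {..<M2} - {s}. alarm x2s s t (x1s s) (x1s t)))"
proof -
  define err where "err s = measure (chan (x1s s) (x2s (snd s))) {y. dec y \<noteq> s}" for s
  have "ennreal (1 / (real M1 * real M2) *
      (\<Sum>m1<M1. \<Sum>m2<M2. measure (chan (x1s (m1, m2)) (x2s m2)) {y. dec y \<noteq> (m1, m2)}))
      = ennreal (1 / (real M1 * real M2)) * ennreal (\<Sum>s\<in>{..<M1} \<times> {..<M2}. err s)"
    unfolding err_def by (subst ennreal_mult[symmetric]) (simp_all add: sum_nonneg sum.cartesian_product')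
  also have "\<dots> = ennreal (1 / (real M1 * real M2)) * (\<Sum>s\<in>{..<M1} \<times> {..<M2}. ennreal (err s))"
    by (subst sum_ennreal) (simp_all add: err_def)
  also have "\<dots> \<le> ennreal (1 / (real M1 * real M2)) * ((\<Sum>s\<in>{..<M1} \<times> {..<M2}. miss (x1s s) (x2s (snd s)))
      + (\<Sum>s\<in>{..<M1} \<times> {..<M2}. \<Sum>t\<in>{..<M1} \<times> {..<M2} - {s}. alarm x2s s t (x1s s) (x1s t)))"
  proof -
    have "ennreal (err s) \<le> miss (x1s s) (x2s (snd s))
        + (\<Sum>t\<in>{..<M1} \<times> {..<M2} - {s}. alarm x2s s t (x1s s) (x1s t))"
      if "s \<in> {..<M1} \<times> {..<M2}" for s
      using emeasure_decoding_error_le[OF that assms[OF that]]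
      by (simp add: err_def finite_measure.emeasure_eq_measure[OF prob_space.finite_measure[OF prob_space_chan]])
    then show ?thesis
      unfolding sum.distrib[symmetric] by (intro mult_left_mono sum_mono) simp_all
  qed
  finally show ?thesis .
qed

lemma exists_good_code:
  fixes S1 S2 :: real
  assumes power: "AE x in P. (norm (fst x))\<^sup>2 \<le> real CARD('n) * S1 \<and> (norm (snd x))\<^sup>2 \<le> real CARD('n) * S2"
  shows "\<exists>(f1 :: nat \<Rightarrow> nat \<Rightarrow> real^'n) (f2 :: nat \<Rightarrow> real^'n) (dec :: real^'n \<Rightarrow> nat \<times> nat) eps.
    is_code M1 M2 S1 S2 eps f1 f2 dec \<and>
    ennreal eps \<le> ennreal (measure (joint_XY P) error_event)
      + \<Lambda>1 * ennreal (exp (- real CARD('n) * \<gamma>)) + \<Lambda>12 * ennreal (exp (- real CARD('n) * \<gamma>))"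
proof -
  define grid where "grid = {..<M1} \<times> {..<M2}"
  obtain x1s x2s where power_x: "\<forall>s\<in>grid.
      (norm (x1s s))\<^sup>2 \<le> real CARD('n) * S1 \<and> (norm (x2s (snd s)))\<^sup>2 \<le> real CARD('n) * S2"
    and bound: "(\<Sum>s\<in>grid. miss (x1s s) (x2s (snd s))) + (\<Sum>s\<in>grid. \<Sum>t\<in>grid - {s}. alarm x2s s t (x1s s) (x1s t))
      \<le> of_nat M1 * of_nat M2 * (emeasure (joint_XY P) error_event
        + \<Lambda>1 * ennreal (exp (- real CARD('n) * \<gamma>)) + \<Lambda>12 * ennreal (exp (- real CARD('n) * \<gamma>)))"
    using exists_codebook[OF power] unfolding grid_def by blast
  define dec where
    "dec = (\<lambda>y. if \<exists>!t. t \<in> grid \<and> accepts x1s x2s t y then THE t. t \<in> grid \<and> accepts x1s x2s t y else (0, 0))"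
  have "finite grid" "(0, 0) \<in> grid"
    using M1_pos M2_pos by (auto simp: grid_def)
  note decoder = unique_passing_decoder[where test="accepts x1s x2s" and M=borel, OF this measurable_accepts]
  have dec: "dec \<in> measurable borel (count_space UNIV)" "dec y \<in> grid"
    "s \<in> grid \<Longrightarrow> dec y \<noteq> s \<Longrightarrow> \<not> accepts x1s x2s s y \<or> (\<exists>t\<in>grid - {s}. accepts x1s x2s t y)"
    for y s
    unfolding dec_def by (fact decoder(1), fact decoder(2), fact decoder(3))
  define eps where "eps = (1 / (real M1 * real M2)) *
    (\<Sum>m1<M1. \<Sum>m2<M2. measure (chan (x1s (m1, m2)) (x2s m2)) {y. dec y \<noteq> (m1, m2)})"
  have code: "is_code M1 M2 S1 S2 eps (\<lambda>m1 m2. x1s (m1, m2)) x2s dec"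
    unfolding is_code_def
  proof (intro conjI allI impI)
    show "(norm (x1s (m1, m2)))\<^sup>2 \<le> real CARD('n) * S1" if "m1 < M1" "m2 < M2" for m1 m2
      using power_x that by (auto simp: grid_def)
    show "(norm (x2s m2))\<^sup>2 \<le> real CARD('n) * S2" if "m2 < M2" for m2
      using power_x that M1_pos by (auto simp: grid_def)
    show "dec y \<in> {..<M1} \<times> {..<M2}" for y
      using dec(2) by (simp add: grid_def)
  qed (simp_all add: dec(1) eps_def)
  have "ennreal eps \<le> ennreal (1 / (real M1 * real M2)) * ((\<Sum>s\<in>grid. miss (x1s s) (x2s (snd s)))
      + (\<Sum>s\<in>grid. \<Sum>t\<in>grid - {s}. alarm x2s s t (x1s s) (x1s t)))"
    unfolding eps_def grid_def by (rule average_decoding_error_le) (use dec(3) in \<open>simp add: grid_def\<close>)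
  also have "\<dots> \<le> ennreal (1 / (real M1 * real M2)) * (of_nat M1 * of_nat M2 * (emeasure (joint_XY P) error_event
      + \<Lambda>1 * ennreal (exp (- real CARD('n) * \<gamma>)) + \<Lambda>12 * ennreal (exp (- real CARD('n) * \<gamma>))))"
    using bound by (rule mult_left_mono) simp
  finally have "ennreal eps \<le> ennreal (1 / (real M1 * real M2)) * (of_nat M1 * of_nat M2 * (emeasure (joint_XY P) error_event
      + \<Lambda>1 * ennreal (exp (- real CARD('n) * \<gamma>)) + \<Lambda>12 * ennreal (exp (- real CARD('n) * \<gamma>))))" .
  moreover have "ennreal (1 / (real M1 * real M2)) * (of_nat M1 * of_nat M2) = 1"
    using M1_pos M2_pos by (simp add: ennreal_of_nat_eq_real_of_nat ennreal_mult[symmetric])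
  moreover have "emeasure (joint_XY P) error_event = ennreal (measure (joint_XY P) error_event)"
    by (rule finite_measure.emeasure_eq_measure[OF prob_space.finite_measure[OF prob_space_joint_XY]])
  ultimately have "ennreal eps \<le> ennreal (measure (joint_XY P) error_event)
      + \<Lambda>1 * ennreal (exp (- real CARD('n) * \<gamma>)) + \<Lambda>12 * ennreal (exp (- real CARD('n) * \<gamma>))"
    by (simp add: mult.assoc[symmetric])
  with code show ?thesis
    by blast
qed

end

lemma is_code_constant:
  fixes x1 x2 :: "real^'n"
  assumes "M1 > 0" "M2 > 0" "(norm x1)\<^sup>2 \<le> real CARD('n) * S1" "(norm x2)\<^sup>2 \<le> real CARD('n) * S2"
  shows "is_code M1 M2 S1 S2 1 (\<lambda>_ _. x1) (\<lambda>_. x2) (\<lambda>_. (0, 0))"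
  unfolding is_code_def
proof (intro conjI allI impI)
  have "(\<Sum>m1<M1. \<Sum>m2<M2. measure (chan x1 x2) {y. (0, 0) \<noteq> (m1, m2)}) \<le> (\<Sum>m1<M1. \<Sum>m2<M2. 1)"
    by (intro sum_mono prob_space.prob_le_1 prob_space_chan)
  then have "(\<Sum>m1<M1. \<Sum>m2<M2. measure (chan x1 x2) {y. (0, 0) \<noteq> (m1, m2)}) \<le> real M1 * real M2"
    by simp
  then show "1 / (real M1 * real M2) * (\<Sum>m1<M1. \<Sum>m2<M2. measure (chan x1 x2) {y. (0, 0) \<noteq> (m1, m2)}) \<le> 1"
    using assms(1,2) by (simp add: divide_le_eq)
  show "(\<lambda>_. (0, 0)) \<in> measurable borel (count_space UNIV)"
    by simp
  show "(0, 0) \<in> {..<M1} \<times> {..<M2}"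
    using assms(1,2) by simp
qed (use assms(3,4) in simp_all)

lemma ennreal_le_add_top_mult:
  fixes a b c e x :: ennreal
  assumes "a = \<top> \<or> b = \<top>" "e \<noteq> 0"
  shows "x \<le> c + a * e + b * e"
  using assms by (auto simp: ennreal_top_mult)

lemma SUP_mixture_ratio_eq_top:
  fixes w :: "'a \<Rightarrow> 'i \<Rightarrow> real" and q :: "'i \<Rightarrow> real"
  assumes "prob_space \<mu>" "(\<lambda>x. w x i) \<in> borel_measurable \<mu>" "\<And>x. w x i > 0" "q i \<le> 0"
  shows "(SUP i. (\<integral>\<^sup>+ x. ennreal (w x i) \<partial>\<mu>) / ennreal (q i)) = \<top>"
  using assms by (intro SUP_divide_ennreal_eq_top nn_integral_pos_ne_zero)

lemma SUP_mixture_ratios_eq_top: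
  fixes P :: "((real^'n) \<times> (real^'n)) measure" and K :: "real^'n \<Rightarrow> (real^'n) measure"
  assumes P_prob: "prob_space P" and P_sets: "sets P = sets borel"
    and K_meas: "K \<in> measurable borel (subprob_algebra borel)" and K_prob: "\<And>x2. prob_space (K x2)"
    and not_pos: "\<not> ((\<forall>y x2. Q1 y x2 > 0) \<and> (\<forall>y. Q y > 0))"
  shows "(SUP x2. SUP y. (\<integral>\<^sup>+ x1. ennreal (Wn y x1 x2) \<partial>K x2) / ennreal (Q1 y x2)) = \<top>
    \<or> (SUP y. (\<integral>\<^sup>+ x. ennreal (Wn y (fst x) (snd x)) \<partial>P) / ennreal (Q y)) = \<top>"
proof (cases "\<forall>y x2. Q1 y x2 > 0")
  case True
  with not_pos obtain y where "Q y \<le> 0"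
    by (auto simp: not_less)
  have [measurable_cong]: "sets P = sets borel"
    by (fact P_sets)
  have "(SUP y. (\<integral>\<^sup>+ x. ennreal (Wn y (fst x) (snd x)) \<partial>P) / ennreal (Q y)) = \<top>"
    by (rule SUP_mixture_ratio_eq_top[where w="\<lambda>x y. Wn y (fst x) (snd x)" and i=y and q=Q, OF P_prob])
       (measurable, simp_all add: Wn_pos \<open>Q y \<le> 0\<close>)
  then show ?thesis ..
next
  case False
  then obtain y x2 where "Q1 y x2 \<le> 0"
    by (auto simp: not_less)
  have [measurable_cong]: "sets (K x2) = sets borel"
    using measurable_space[OF K_meas, of x2] by (simp add: space_subprob_algebra)
  have "(SUP y. (\<integral>\<^sup>+ x1. ennreal (Wn y x1 x2) \<partial>K x2) / ennreal (Q1 y x2)) = \<top>"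
    by (rule SUP_mixture_ratio_eq_top[where w="\<lambda>x1 y. Wn y x1 x2" and i=y and q="\<lambda>y. Q1 y x2", OF K_prob])
       (measurable, simp_all add: Wn_pos \<open>Q1 y x2 \<le> 0\<close>)
  moreover have "(SUP y. (\<integral>\<^sup>+ x1. ennreal (Wn y x1 x2) \<partial>K x2) / ennreal (Q1 y x2))
      \<le> (SUP x2. SUP y. (\<integral>\<^sup>+ x1. ennreal (Wn y x1 x2) \<partial>K x2) / ennreal (Q1 y x2))"
    by (rule SUP_upper) simp
  ultimately have "(SUP x2. SUP y. (\<integral>\<^sup>+ x1. ennreal (Wn y x1 x2) \<partial>K x2) / ennreal (Q1 y x2)) = \<top>"
    by (simp only: top_unique)
  then show ?thesis ..
qed

theorem proposition4:
  fixes P :: "((real^'n) \<times> (real^'n)) measure"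
    and PX1X2 :: "real^'n \<Rightarrow> (real^'n) measure"
    and QYX2 :: "real^'n \<Rightarrow> real^'n \<Rightarrow> real"
    and QY :: "real^'n \<Rightarrow> real"
    and M1 M2 :: nat and S1 S2 \<gamma> :: real
  assumes M1_pos: "M1 > 0" and M2_pos: "M2 > 0"
    and P_prob: "prob_space P" and P_sets: "sets P = sets borel"
    and P_power: "AE x in P. (norm (fst x))\<^sup>2 \<le> real CARD('n) * S1 \<and> (norm (snd x))\<^sup>2 \<le> real CARD('n) * S2"
    and K_meas: "PX1X2 \<in> measurable borel (subprob_algebra borel)"
    and K_prob: "\<And>x2. prob_space (PX1X2 x2)"
    and K_disint: "P = distr P borel snd \<bind> (\<lambda>x2. distr (PX1X2 x2) borel (\<lambda>x1. (x1, x2)))"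
    and QYX2_nonneg: "\<And>y x2. QYX2 y x2 \<ge> 0"
    and QYX2_meas: "(\<lambda>(y, x2). QYX2 y x2) \<in> borel_measurable borel"
    and QYX2_dens: "\<And>x2. (\<integral>\<^sup>+ y. ennreal (QYX2 y x2) \<partial>lborel) = 1"
    and QY_nonneg: "\<And>y. QY y \<ge> 0"
    and QY_meas: "QY \<in> borel_measurable borel"
    and QY_dens: "(\<integral>\<^sup>+ y. ennreal (QY y) \<partial>lborel) = 1"
    and \<gamma>_pos: "\<gamma> > 0"
  shows "\<exists>(f1 :: nat \<Rightarrow> nat \<Rightarrow> real^'n) (f2 :: nat \<Rightarrow> real^'n) (dec :: real^'n \<Rightarrow> nat \<times> nat) eps. is_code M1 M2 S1 S2 eps f1 f2 dec \<and>
    ennreal eps \<le>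
      ennreal (measure (joint_XY P)
        {((x1, x2), y).
           (1 / real CARD('n)) * ln (Wn y x1 x2 / QYX2 y x2)
              \<le> (1 / real CARD('n)) * ln (real M1) + \<gamma>
         \<or> (1 / real CARD('n)) * ln (Wn y x1 x2 / QY y)
              \<le> (1 / real CARD('n)) * ln (real M1 * real M2) + \<gamma>})
      + (SUP x2. SUP y. (\<integral>\<^sup>+ x1. ennreal (Wn y x1 x2) \<partial>PX1X2 x2) / ennreal (QYX2 y x2))
          * ennreal (exp (- real CARD('n) * \<gamma>))
      + (SUP y. (\<integral>\<^sup>+ x. ennreal (Wn y (fst x) (snd x)) \<partial>P) / ennreal (QY y))
          * ennreal (exp (- real CARD('n) * \<gamma>))"
proof (cases "(\<forall>y x2. QYX2 y x2 > 0) \<and> (\<forall>y. QY y > 0)")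
  case True
  interpret mac_random_coding P PX1X2 QYX2 QY M1 M2 \<gamma>
    by (rule mac_random_coding.intro[OF M1_pos M2_pos P_prob P_sets K_meas K_prob K_disint _ QYX2_meas _ QY_meas])
       (use True in auto)
  show ?thesis
    using exists_good_code[OF P_power] unfolding error_event_def \<Lambda>1_def \<Lambda>12_def .
next
  case False
  obtain x :: "(real^'n) \<times> (real^'n)"
    where "(norm (fst x))\<^sup>2 \<le> real CARD('n) * S1" "(norm (snd x))\<^sup>2 \<le> real CARD('n) * S2"
    using AE_exists_le_nn_integral[OF P_prob P_power borel_measurable_const[of 0]] by blast
  then have "is_code M1 M2 S1 S2 1 (\<lambda>_ _. fst x) (\<lambda>_. snd x) (\<lambda>_. (0, 0))"
    by (rule is_code_constant[OF M1_pos M2_pos])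
  moreover have "(SUP x2. SUP y. (\<integral>\<^sup>+ x1. ennreal (Wn y x1 x2) \<partial>PX1X2 x2) / ennreal (QYX2 y x2)) = \<top>
      \<or> (SUP y. (\<integral>\<^sup>+ x. ennreal (Wn y (fst x) (snd x)) \<partial>P) / ennreal (QY y)) = \<top>"
    by (rule SUP_mixture_ratios_eq_top[OF P_prob P_sets K_meas K_prob False])
  ultimately show ?thesis
    by (intro exI[of _ "\<lambda>_ _. fst x"] exI[of _ "\<lambda>_. snd x"] exI[of _ "\<lambda>_. (0, 0)"] exI[of _ 1] conjI
        ennreal_le_add_top_mult) simp_all
qed

end
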